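(* Fix a finite algebraic type and a pseudovariety $\mathsf U$ of algebras of this type. Let $\Sigma$ be a set of identities, that is, equalities $u=v$ between terms (regarded as $\mathsf U$-pseudoidentities via the natural images of terms in the free pro-$\mathsf U$ algebras), such that the variety of all algebras of the given type satisfying $\Sigma$ is locally finite. Then $\Sigma$ is h-strong within $\mathsf U$.
   Context: A pseudovariety is a nonempty class of finite algebras of a fixed finite type (finite set of finitary operation symbols) closed under homomorphic images, subalgebras and finite direct products. A variety is locally finite if all its finitely generated algebras are finite. For a pseudovariety $\mathsf U$ and a finite set $A$, $\Omega_A\mathsf U$ denotes the free pro-$\mathsf U$ algebra on $A$ (the inverse limit of all $A$-generated members of $\mathsf U$); it is a compact metrizable topological algebra and every map from $A$ into a pro-$\mathsf U$ algebra $T$ extends uniquely to a continuous homomorphism $\Omega_A\mathsf U\to T$. A $\mathsf U$-pseudoidentity is a formal equality $u=v$ with $u,v\in\Omega_B\mathsf U$ for some finite set $B$; it holds in $T\in\mathsf U$ if $\hat\varphi(u)=\hat\varphi(v)$ for every map $\varphi:B\to T$ with continuous homomorphic extension $\hat\varphi$. For a set $\Sigma$ of $\mathsf U$-pseudoidentities, $[\![\Sigma]\!]_{\mathsf U}$ is the class of members of $\mathsf U$ satisfying all of $\Sigma$. Provability: for a finite set $A$ define relations $\Sigma_\alpha\subseteq\Omega_A\mathsf U\times\Omega_A\mathsf U$ by transfinite recursion: $\Sigma_0$ consists of all pairs $(\mathbf t(\varphi(u),w_1,\dots,w_n),\mathbf t(\varphi(v),w_1,\dots,w_n))$ where $u=v$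 or $v=u$ belongs to $\Sigma$ with $u,v\in\Omega_B\mathsf U$, $\varphi:\Omega_B\mathsf U\to\Omega_A\mathsf U$ is a continuous homomorphism, $\mathbf t$ is a term in the basic operations and $w_i\in\Omega_A\mathsf U$; $\Sigma_{2\alpha+1}$ is the transitive closure of $\Sigma_{2\alpha}$; $\Sigma_{2\alpha+2}$ is the topological closure of $\Sigma_{2\alpha+1}$ in $\Omega_A\mathsf U\times\Omega_A\mathsf U$; $\Sigma_\lambda=\bigcup_{\beta<\lambda}\Sigma_\beta$ for limit ordinals $\lambda$. Let $\tilde\Sigma=\bigcup_\alpha\Sigma_\alpha$. A pseudoidentity $u=v$ with $u,v\in\Omega_A\mathsf U$ is provable from $\Sigma$ if $(u,v)\in\tilde\Sigma$. A set $\Sigma$ of $\mathsf U$-pseudoidentities is h-strong within $\mathsf U$ if every $\mathsf U$-pseudoidentity valid in $[\![\Sigma]\!]_{\mathsf U}$ is provable from $\Sigma$. *)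

theory Defs
  imports "HOL-Analysis.Analysis"
begin

text \<open>An algebra is a pair (carrier, interpretation of the operations);
the interpretation is only relevant on argument lists of the right length lying in
the carrier.\<close>

type_synonym ('f, 'a) alg = "'a set \<times> ('f \<Rightarrow> 'a list \<Rightarrow> 'a)"

definition ua_carrier :: "('f, 'a) alg \<Rightarrow> 'a set" where
  "ua_carrier S = fst S"

definition ua_ops :: "('f, 'a) alg \<Rightarrow> 'f \<Rightarrow> 'a list \<Rightarrow> 'a" where
  "ua_ops S = snd S"

definition is_alg :: "('f \<Rightarrow> nat) \<Rightarrow> ('f, 'a) alg \<Rightarrow> bool" where
  "is_alg ar S \<longleftrightarrow> (\<forall>f xs. set xs \<subseteq> ua_carrier S \<and> length xs = ar f
       \<longrightarrow> ua_ops S f xs \<in> ua_carrier S)"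

definition ua_hom :: "('f \<Rightarrow> nat) \<Rightarrow> ('f, 'a) alg \<Rightarrow> ('f, 'b) alg \<Rightarrow> ('a \<Rightarrow> 'b) \<Rightarrow> bool" where
  "ua_hom ar S T h \<longleftrightarrow> h \<in> ua_carrier S \<rightarrow> ua_carrier T \<and>
     (\<forall>f xs. set xs \<subseteq> ua_carrier S \<and> length xs = ar f
        \<longrightarrow> h (ua_ops S f xs) = ua_ops T f (map h xs))"

definition ua_closed :: "('f \<Rightarrow> nat) \<Rightarrow> ('f, 'a) alg \<Rightarrow> 'a set \<Rightarrow> bool" where
  "ua_closed ar S Y \<longleftrightarrow> (\<forall>f xs. set xs \<subseteq> Y \<and> length xs = ar f \<longrightarrow> ua_ops S f xs \<in> Y)"

definition ua_generated :: "('f \<Rightarrow> nat) \<Rightarrow> ('f, 'a) alg \<Rightarrow> 'a set \<Rightarrow> 'a set" where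
  "ua_generated ar S X = \<Inter>{Y. X \<subseteq> Y \<and> Y \<subseteq> ua_carrier S \<and> ua_closed ar S Y}"

definition prod_alg :: "'i set \<Rightarrow> ('i \<Rightarrow> ('f, 'a) alg) \<Rightarrow> ('f, 'i \<Rightarrow> 'a) alg" where
  "prod_alg I Sf = (PiE I (\<lambda>i. ua_carrier (Sf i)),
     (\<lambda>f xs. \<lambda>i\<in>I. ua_ops (Sf i) f (map (\<lambda>x. x i) xs)))"

text \<open>A pseudovariety is represented by the set of its members whose carrier is a
(finite) set of natural numbers; every finite algebra is isomorphic to such a member,
and all closure properties are stated up to isomorphism (via homomorphic images).\<close>

definition pseudovariety :: "('f \<Rightarrow> nat) \<Rightarrow> ('f, nat) alg set \<Rightarrow> bool" where
  "pseudovariety ar U \<longleftrightarrow>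
     U \<noteq> {} \<and>
     (\<forall>S\<in>U. is_alg ar S \<and> finite (ua_carrier S)) \<and>
     \<comment> \<open>homomorphic images\<close>
     (\<forall>S\<in>U. \<forall>T :: ('f, nat) alg. is_alg ar T \<and>
         (\<exists>h. ua_hom ar S T h \<and> h ` ua_carrier S = ua_carrier T) \<longrightarrow> T \<in> U) \<and>
     \<comment> \<open>subalgebras\<close>
     (\<forall>S\<in>U. \<forall>T :: ('f, nat) alg. ua_carrier T \<subseteq> ua_carrier S \<and>
         ua_closed ar S (ua_carrier T) \<and>
         (\<forall>f xs. set xs \<subseteq> ua_carrier T \<and> length xs = ar f \<longrightarrow> ua_ops T f xs = ua_ops S f xs)
         \<longrightarrow> T \<in> U) \<and>
     \<comment> \<open>finite direct products (up to isomorphism)\<close>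
     (\<forall>(I :: nat set) Sf. finite I \<and> (\<forall>i\<in>I. Sf i \<in> U) \<longrightarrow>
        (\<forall>T :: ('f, nat) alg. is_alg ar T \<and>
           (\<exists>h. ua_hom ar (prod_alg I Sf) T h \<and>
                bij_betw h (ua_carrier (prod_alg I Sf)) (ua_carrier T)) \<longrightarrow> T \<in> U))"

datatype ('f, 'v) trm = Var 'v | App 'f "('f, 'v) trm list"

fun wf_trm :: "('f \<Rightarrow> nat) \<Rightarrow> ('f, 'v) trm \<Rightarrow> bool" where
  "wf_trm ar (Var x) = True"
| "wf_trm ar (App f ts) = (length ts = ar f \<and> list_all (wf_trm ar) ts)"

fun trm_vars :: "('f, 'v) trm \<Rightarrow> 'v set" where
  "trm_vars (Var x) = {x}"
| "trm_vars (App f ts) = \<Union>(set (map trm_vars ts))"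

fun eval_trm :: "('f \<Rightarrow> 'a list \<Rightarrow> 'a) \<Rightarrow> ('v \<Rightarrow> 'a) \<Rightarrow> ('f, 'v) trm \<Rightarrow> 'a" where
  "eval_trm F \<sigma> (Var x) = \<sigma> x"
| "eval_trm F \<sigma> (App f ts) = F f (map (eval_trm F \<sigma>) ts)"

definition sat_identity :: "('f, 'a) alg \<Rightarrow> ('f, 'v) trm \<times> ('f, 'v) trm \<Rightarrow> bool" where
  "sat_identity M e \<longleftrightarrow> (\<forall>\<sigma>. (\<forall>x. \<sigma> x \<in> ua_carrier M) \<longrightarrow>
      eval_trm (ua_ops M) \<sigma> (fst e) = eval_trm (ua_ops M) \<sigma> (snd e))"

text \<open>Finitely generated algebras of a finite type are countable,
so it suffices to consider algebras with carrier a set of natural numbers.\<close>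

definition locally_finite_variety :: "('f \<Rightarrow> nat) \<Rightarrow> (('f, 'v) trm \<times> ('f, 'v) trm) set \<Rightarrow> bool" where
  "locally_finite_variety ar \<Sigma> \<longleftrightarrow>
     (\<forall>M :: ('f, nat) alg. is_alg ar M \<and> (\<forall>e\<in>\<Sigma>. sat_identity M e) \<longrightarrow>
        (\<forall>G. finite G \<and> G \<subseteq> ua_carrier M \<and> ua_generated ar M G = ua_carrier M
             \<longrightarrow> finite (ua_carrier M)))"

text \<open>Omega_A U is realised as the inverse limit of the A-generated members of U:
it is indexed by the pairs (S, \<phi>) with S \<in> U and \<phi> : A \<rightarrow> S a generating map; an element
is a compatible family of elements x(S,\<phi>) \<in> S, compatibility meaning preservation by
every homomorphism between such pairs that respects the generators.\<close>

definition Omega_idx :: "('f \<Rightarrow> nat) \<Rightarrow> ('f, nat) alg set \<Rightarrow> 'v set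
    \<Rightarrow> (('f, nat) alg \<times> ('v \<Rightarrow> nat)) set" where
  "Omega_idx ar U A = {(S, \<phi>). S \<in> U \<and> \<phi> \<in> A \<rightarrow>\<^sub>E ua_carrier S \<and>
       ua_generated ar S (\<phi> ` A) = ua_carrier S}"

definition Omega :: "('f \<Rightarrow> nat) \<Rightarrow> ('f, nat) alg set \<Rightarrow> 'v set
    \<Rightarrow> ((('f, nat) alg \<times> ('v \<Rightarrow> nat)) \<Rightarrow> nat) set" where
  "Omega ar U A = {x. x \<in> PiE (Omega_idx ar U A) (\<lambda>k. ua_carrier (fst k)) \<and>
     (\<forall>S \<phi> T \<psi> h. (S, \<phi>) \<in> Omega_idx ar U A \<and> (T, \<psi>) \<in> Omega_idx ar U A \<and>
        ua_hom ar S T h \<and> (\<forall>a\<in>A. h (\<phi> a) = \<psi> a) \<longrightarrow> h (x (S, \<phi>)) = x (T, \<psi>))}"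

definition Omega_op :: "('f \<Rightarrow> nat) \<Rightarrow> ('f, nat) alg set \<Rightarrow> 'v set
    \<Rightarrow> 'f \<Rightarrow> ((('f, nat) alg \<times> ('v \<Rightarrow> nat)) \<Rightarrow> nat) list
    \<Rightarrow> (('f, nat) alg \<times> ('v \<Rightarrow> nat)) \<Rightarrow> nat" where
  "Omega_op ar U A f xs = (\<lambda>k\<in>Omega_idx ar U A. ua_ops (fst k) f (map (\<lambda>x. x k) xs))"

definition Omega_alg :: "('f \<Rightarrow> nat) \<Rightarrow> ('f, nat) alg set \<Rightarrow> 'v set
    \<Rightarrow> ('f, (('f, nat) alg \<times> ('v \<Rightarrow> nat)) \<Rightarrow> nat) alg" where
  "Omega_alg ar U A = (Omega ar U A, Omega_op ar U A)"

definition Omega_top :: "('f \<Rightarrow> nat) \<Rightarrow> ('f, nat) alg set \<Rightarrow> 'v set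
    \<Rightarrow> ((('f, nat) alg \<times> ('v \<Rightarrow> nat)) \<Rightarrow> nat) topology" where
  "Omega_top ar U A = subtopology
     (product_topology (\<lambda>k. discrete_topology (ua_carrier (fst k))) (Omega_idx ar U A))
     (Omega ar U A)"

definition Omega_gen :: "('f \<Rightarrow> nat) \<Rightarrow> ('f, nat) alg set \<Rightarrow> 'v set \<Rightarrow> 'v
    \<Rightarrow> (('f, nat) alg \<times> ('v \<Rightarrow> nat)) \<Rightarrow> nat" where
  "Omega_gen ar U A a = (\<lambda>k\<in>Omega_idx ar U A. snd k a)"

definition Omega_trm :: "('f \<Rightarrow> nat) \<Rightarrow> ('f, nat) alg set \<Rightarrow> 'v set \<Rightarrow> ('f, 'v) trm
    \<Rightarrow> (('f, nat) alg \<times> ('v \<Rightarrow> nat)) \<Rightarrow> nat" where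
  "Omega_trm ar U A t = eval_trm (Omega_op ar U A) (Omega_gen ar U A) t"

definition cont_hom_to_alg :: "('f \<Rightarrow> nat) \<Rightarrow> ('f, nat) alg set \<Rightarrow> 'v set \<Rightarrow> ('f, nat) alg
    \<Rightarrow> (((('f, nat) alg \<times> ('v \<Rightarrow> nat)) \<Rightarrow> nat) \<Rightarrow> nat) \<Rightarrow> bool" where
  "cont_hom_to_alg ar U B T h \<longleftrightarrow> ua_hom ar (Omega_alg ar U B) T h \<and>
     continuous_map (Omega_top ar U B) (discrete_topology (ua_carrier T)) h"

definition cont_hom_Omega :: "('f \<Rightarrow> nat) \<Rightarrow> ('f, nat) alg set \<Rightarrow> 'v set \<Rightarrow> 'w set
    \<Rightarrow> (((('f, nat) alg \<times> ('v \<Rightarrow> nat)) \<Rightarrow> nat) \<Rightarrow> ((('f, nat) alg \<times> ('w \<Rightarrow> nat)) \<Rightarrow> nat)) \<Rightarrow> bool" where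
  "cont_hom_Omega ar U B A g \<longleftrightarrow> ua_hom ar (Omega_alg ar U B) (Omega_alg ar U A) g \<and>
     continuous_map (Omega_top ar U B) (Omega_top ar U A) g"

definition pi_holds :: "('f \<Rightarrow> nat) \<Rightarrow> ('f, nat) alg set \<Rightarrow> ('f, nat) alg \<Rightarrow> 'v set
    \<Rightarrow> ((('f, nat) alg \<times> ('v \<Rightarrow> nat)) \<Rightarrow> nat) \<Rightarrow> ((('f, nat) alg \<times> ('v \<Rightarrow> nat)) \<Rightarrow> nat) \<Rightarrow> bool" where
  "pi_holds ar U T B u v \<longleftrightarrow>
     (\<forall>\<phi> h. \<phi> \<in> B \<rightarrow> ua_carrier T \<and> cont_hom_to_alg ar U B T h \<and>
        (\<forall>b\<in>B. h (Omega_gen ar U B b) = \<phi> b) \<longrightarrow> h u = h v)"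

text \<open>An identity (u, v) of terms, regarded as the pseudoidentity over the finite set
B of variables occurring in it.\<close>

definition id_vars :: "('f, 'v) trm \<times> ('f, 'v) trm \<Rightarrow> 'v set" where
  "id_vars e = trm_vars (fst e) \<union> trm_vars (snd e)"

definition in_model :: "('f \<Rightarrow> nat) \<Rightarrow> ('f, nat) alg set \<Rightarrow> (('f, 'v) trm \<times> ('f, 'v) trm) set
    \<Rightarrow> ('f, nat) alg \<Rightarrow> bool" where
  "in_model ar U \<Sigma> T \<longleftrightarrow> T \<in> U \<and>
     (\<forall>e\<in>\<Sigma>. pi_holds ar U T (id_vars e)
        (Omega_trm ar U (id_vars e) (fst e)) (Omega_trm ar U (id_vars e) (snd e)))"

text \<open>The relation Sigma_0 on Omega_A U.  The term t is any term; its variable 0 is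
substituted by \<phi>(u) and the remaining variables by arbitrary elements w_i.\<close>

definition Sigma0 :: "('f \<Rightarrow> nat) \<Rightarrow> ('f, nat) alg set \<Rightarrow> (('f, 'v) trm \<times> ('f, 'v) trm) set
    \<Rightarrow> 'w set \<Rightarrow> (((('f, nat) alg \<times> ('w \<Rightarrow> nat)) \<Rightarrow> nat) \<times> ((('f, nat) alg \<times> ('w \<Rightarrow> nat)) \<Rightarrow> nat)) set" where
  "Sigma0 ar U \<Sigma> A =
     {(eval_trm (Omega_op ar U A) (\<sigma>(0 := g p)) t, eval_trm (Omega_op ar U A) (\<sigma>(0 := g q)) t) |
        e p q g t \<sigma>. e \<in> \<Sigma> \<and>
          ((p = Omega_trm ar U (id_vars e) (fst e) \<and> q = Omega_trm ar U (id_vars e) (snd e)) \<or>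
           (p = Omega_trm ar U (id_vars e) (snd e) \<and> q = Omega_trm ar U (id_vars e) (fst e))) \<and>
          cont_hom_Omega ar U (id_vars e) A g \<and>
          wf_trm ar (t :: ('f, nat) trm) \<and> (\<forall>i. \<sigma> i \<in> Omega ar U A)}"

text \<open>The union of the transfinite sequence Sigma_alpha (alternately transitive closure and
topological closure in Omega_A U \<times> Omega_A U, unions at limits) is the least
relation containing Sigma_0 which is transitive and closed.\<close>

definition Sigma_tilde :: "('f \<Rightarrow> nat) \<Rightarrow> ('f, nat) alg set \<Rightarrow> (('f, 'v) trm \<times> ('f, 'v) trm) set
    \<Rightarrow> 'w set \<Rightarrow> (((('f, nat) alg \<times> ('w \<Rightarrow> nat)) \<Rightarrow> nat) \<times> ((('f, nat) alg \<times> ('w \<Rightarrow> nat)) \<Rightarrow> nat)) set" where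
  "Sigma_tilde ar U \<Sigma> A = \<Inter>{R. Sigma0 ar U \<Sigma> A \<subseteq> R \<and> trans R \<and>
      closedin (prod_topology (Omega_top ar U A) (Omega_top ar U A)) R}"

definition provable :: "('f \<Rightarrow> nat) \<Rightarrow> ('f, nat) alg set \<Rightarrow> (('f, 'v) trm \<times> ('f, 'v) trm) set
    \<Rightarrow> 'w set \<Rightarrow> ((('f, nat) alg \<times> ('w \<Rightarrow> nat)) \<Rightarrow> nat) \<Rightarrow> ((('f, nat) alg \<times> ('w \<Rightarrow> nat)) \<Rightarrow> nat) \<Rightarrow> bool" where
  "provable ar U \<Sigma> A u v \<longleftrightarrow> u = v \<or> (u, v) \<in> Sigma_tilde ar U \<Sigma> A"

definition h_strong :: "('f \<Rightarrow> nat) \<Rightarrow> ('f, nat) alg set \<Rightarrow> (('f, nat) trm \<times> ('f, nat) trm) set \<Rightarrow> bool" where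
  "h_strong ar U \<Sigma> \<longleftrightarrow>
     (\<forall>A :: nat set. finite A \<longrightarrow>
       (\<forall>u\<in>Omega ar U A. \<forall>v\<in>Omega ar U A.
          (\<forall>T. in_model ar U \<Sigma> T \<longrightarrow> pi_holds ar U T A u v) \<longrightarrow> provable ar U \<Sigma> A u v))"

end

theory Submission
  imports Defs "HOL-Library.Countable"
begin

text \<open>Fix a finite set \<open>A\<close> and let \<open>\<approx>\<close> be provability on \<open>\<Omega>\<^sub>A U\<close>; it is a closed congruence
(reflexive, symmetric and transitive, preserved by all unary polynomials). The images of the
terms in \<open>\<Omega>\<^sub>A U\<close> modulo \<open>\<approx>\<close> form an \<open>A\<close>-generated algebra satisfying \<open>\<Sigma>\<close>, hence a finite one
by local finiteness. As terms are dense in \<open>\<Omega>\<^sub>A U\<close> and the classes are closed, \<open>\<Omega>\<^sub>A U\<close> has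
only finitely many \<open>\<approx>\<close>-classes, and by compactness a single coordinate \<open>k\<^sub>0\<close> of the inverse
limit already separates them. So the term model is a homomorphic image of the member of \<open>U\<close>
at \<open>k\<^sub>0\<close>, lies in the pseudovariety defined by \<open>\<Sigma>\<close>, and the projection of \<open>\<Omega>\<^sub>A U\<close> onto it
is a continuous homomorphism whose kernel is \<open>\<approx>\<close>: a pseudoidentity valid there is provable.\<close>

instance trm :: (countable, countable) countable
  by countable_datatype

definition wf_terms :: "('f \<Rightarrow> nat) \<Rightarrow> 'v set \<Rightarrow> ('f, 'v) trm set" where
  "wf_terms ar A = {t. wf_trm ar t \<and> trm_vars t \<subseteq> A}"

lemma App_in_wf_terms:
  "length ts = ar f \<Longrightarrow> set ts \<subseteq> wf_terms ar A \<Longrightarrow> App f ts \<in> wf_terms ar A"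
  unfolding wf_terms_def by (auto simp: list_all_iff)

lemma Var_in_wf_terms: "x \<in> A \<Longrightarrow> Var x \<in> wf_terms ar A"
  unfolding wf_terms_def by simp

fun subst :: "('v \<Rightarrow> ('f, 'w) trm) \<Rightarrow> ('f, 'v) trm \<Rightarrow> ('f, 'w) trm" where
  "subst s (Var x) = s x"
| "subst s (App f ts) = App f (map (subst s) ts)"

lemma wf_subst: "wf_trm ar t \<Longrightarrow> (\<forall>x\<in>trm_vars t. wf_trm ar (s x)) \<Longrightarrow> wf_trm ar (subst s t)"
  by (induction t) (auto simp: list_all_iff)

lemma trm_vars_subst: "trm_vars (subst s t) = (\<Union>x\<in>trm_vars t. trm_vars (s x))"
  by (induction t) auto

lemma subst_in_wf_terms:
  "t \<in> wf_terms ar B \<Longrightarrow> (\<And>x. x \<in> B \<Longrightarrow> s x \<in> wf_terms ar A) \<Longrightarrow> subst s t \<in> wf_terms ar A"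
  unfolding wf_terms_def by (auto intro!: wf_subst simp: trm_vars_subst)

lemma eval_trm_cong:
  "(\<And>x. x \<in> trm_vars t \<Longrightarrow> \<sigma> x = \<tau> x) \<Longrightarrow> eval_trm F \<sigma> t = eval_trm F \<tau> t"
proof (induction t)
  case (App f ts)
  then have "map (eval_trm F \<sigma>) ts = map (eval_trm F \<tau>) ts"
    by (auto simp: map_eq_conv)
  then show ?case by (simp only: eval_trm.simps)
qed simp

lemma eval_subst: "eval_trm F \<rho> (subst s t) = eval_trm F (\<lambda>x. eval_trm F \<rho> (s x)) t"
proof (induction t)
  case (App f ts)
  then have "map (eval_trm F \<rho>) (map (subst s) ts) = map (eval_trm F (\<lambda>x. eval_trm F \<rho> (s x))) ts"
    by simp
  then show ?case by (simp only: subst.simps eval_trm.simps)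
qed simp

lemma eval_trm_in_carrier:
  assumes "is_alg ar S" "wf_trm ar t" "\<forall>x\<in>trm_vars t. \<sigma> x \<in> ua_carrier S"
  shows "eval_trm (ua_ops S) \<sigma> t \<in> ua_carrier S"
  using assms(2,3)
proof (induction t)
  case (App f ts)
  then have "set (map (eval_trm (ua_ops S) \<sigma>) ts) \<subseteq> ua_carrier S"
    by (auto simp: list_all_iff)
  then show ?case using App.prems assms(1) unfolding is_alg_def by auto
qed simp

lemma hom_eval_trm:
  assumes "ua_hom ar S T h" "is_alg ar S" "wf_trm ar t" "\<forall>x\<in>trm_vars t. \<sigma> x \<in> ua_carrier S"
  shows "h (eval_trm (ua_ops S) \<sigma> t) = eval_trm (ua_ops T) (\<lambda>x. h (\<sigma> x)) t"
  using assms(3,4)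
proof (induction t)
  case (App f ts)
  have "set (map (eval_trm (ua_ops S) \<sigma>) ts) \<subseteq> ua_carrier S"
    using App.prems eval_trm_in_carrier[OF assms(2)] by (force simp: list_all_iff)
  then have "h (eval_trm (ua_ops S) \<sigma> (App f ts)) = ua_ops T f (map h (map (eval_trm (ua_ops S) \<sigma>) ts))"
    using assms(1) App.prems unfolding ua_hom_def by simp
  also have "map h (map (eval_trm (ua_ops S) \<sigma>) ts) = map (eval_trm (ua_ops T) (\<lambda>x. h (\<sigma> x))) ts"
    using App by (auto simp: list_all_iff)
  finally show ?case by simp
qed simp

definition term_values :: "('f \<Rightarrow> nat) \<Rightarrow> ('f, 'a) alg \<Rightarrow> ('v \<Rightarrow> 'a) \<Rightarrow> 'v set \<Rightarrow> 'a set" where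
  "term_values ar S \<phi> A = eval_trm (ua_ops S) \<phi> ` wf_terms ar A"

lemma term_values_closed: "ua_closed ar S (term_values ar S \<phi> A)"
  unfolding ua_closed_def
proof (intro allI impI)
  fix f xs assume xs: "set xs \<subseteq> term_values ar S \<phi> A \<and> length xs = ar f"
  then have "xs \<in> map (eval_trm (ua_ops S) \<phi>) ` lists (wf_terms ar A)"
    unfolding term_values_def lists_image[symmetric] by auto
  then obtain ts where ts: "set ts \<subseteq> wf_terms ar A" "xs = map (eval_trm (ua_ops S) \<phi>) ts"
    by auto
  then have "App f ts \<in> wf_terms ar A" using xs by (intro App_in_wf_terms) auto
  then show "ua_ops S f xs \<in> term_values ar S \<phi> A"
    unfolding term_values_def using ts(2) by force
qed

lemma term_values_least:
  assumes "\<phi> ` A \<subseteq> Y" "ua_closed ar S Y"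
  shows "term_values ar S \<phi> A \<subseteq> Y"
proof -
  have "eval_trm (ua_ops S) \<phi> t \<in> Y" if "wf_trm ar t" "trm_vars t \<subseteq> A" for t
    using that
  proof (induction t)
    case (App f ts)
    then have "set (map (eval_trm (ua_ops S) \<phi>) ts) \<subseteq> Y" by (auto simp: list_all_iff)
    then show ?case using App.prems assms(2) unfolding ua_closed_def by auto
  qed (use assms(1) in auto)
  then show ?thesis unfolding term_values_def wf_terms_def by blast
qed

lemma term_values_subset:
  assumes "is_alg ar S" "\<phi> ` A \<subseteq> ua_carrier S"
  shows "term_values ar S \<phi> A \<subseteq> ua_carrier S"
proof
  fix y assume "y \<in> term_values ar S \<phi> A"
  then obtain t where t: "wf_trm ar t" "trm_vars t \<subseteq> A" "y = eval_trm (ua_ops S) \<phi> t"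
    unfolding term_values_def wf_terms_def by blast
  then have "\<forall>x\<in>trm_vars t. \<phi> x \<in> ua_carrier S" using assms(2) by blast
  then show "y \<in> ua_carrier S" using eval_trm_in_carrier[OF assms(1) t(1)] t(3) by simp
qed

lemma ua_generated_eq_term_values:
  assumes "is_alg ar S" "\<phi> ` A \<subseteq> ua_carrier S"
  shows "ua_generated ar S (\<phi> ` A) = term_values ar S \<phi> A"
proof
  have "\<phi> ` A \<subseteq> term_values ar S \<phi> A"
    unfolding term_values_def using Var_in_wf_terms by force
  moreover have "term_values ar S \<phi> A \<subseteq> ua_carrier S"
    using term_values_subset[OF assms] .
  ultimately show "ua_generated ar S (\<phi> ` A) \<subseteq> term_values ar S \<phi> A"
    unfolding ua_generated_def by (intro Inter_lower) (simp add: term_values_closed)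
  show "term_values ar S \<phi> A \<subseteq> ua_generated ar S (\<phi> ` A)"
    unfolding ua_generated_def by (intro Inter_greatest) (simp add: term_values_least)
qed

definition gen_subalg :: "('f \<Rightarrow> nat) \<Rightarrow> ('f, 'a) alg \<Rightarrow> 'a set \<Rightarrow> ('f, 'a) alg" where
  "gen_subalg ar S X = (ua_generated ar S X, ua_ops S)"

lemma gen_subalg_simps [simp]:
  "ua_carrier (gen_subalg ar S X) = ua_generated ar S X" "ua_ops (gen_subalg ar S X) = ua_ops S"
  unfolding gen_subalg_def ua_carrier_def ua_ops_def by auto

lemma ua_generated_subset: "is_alg ar S \<Longrightarrow> X \<subseteq> ua_carrier S \<Longrightarrow> ua_generated ar S X \<subseteq> ua_carrier S"
  unfolding ua_generated_def by (intro Inter_lower) (simp add: is_alg_def ua_closed_def)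

lemma ua_generated_closed: "ua_closed ar S (ua_generated ar S X)"
  unfolding ua_closed_def
proof (intro allI impI)
  fix f xs assume xs: "set xs \<subseteq> ua_generated ar S X \<and> length xs = ar f"
  show "ua_ops S f xs \<in> ua_generated ar S X"
    unfolding ua_generated_def
  proof (rule InterI)
    fix Y assume Y: "Y \<in> {Y. X \<subseteq> Y \<and> Y \<subseteq> ua_carrier S \<and> ua_closed ar S Y}"
    then have "set xs \<subseteq> Y" using xs unfolding ua_generated_def by blast
    then show "ua_ops S f xs \<in> Y" using xs Y unfolding ua_closed_def by blast
  qed
qed

lemma hom_gen_subalg:
  assumes hom: "ua_hom ar S T h" and S: "is_alg ar S" and T: "is_alg ar T"
    and \<phi>: "\<phi> ` A \<subseteq> ua_carrier S" and \<psi>: "\<psi> ` A \<subseteq> ua_carrier T"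
    and h\<phi>: "\<And>a. a \<in> A \<Longrightarrow> h (\<phi> a) = \<psi> a"
  shows "ua_hom ar (gen_subalg ar S (\<phi> ` A)) (gen_subalg ar T (\<psi> ` A)) h"
  unfolding ua_hom_def gen_subalg_simps
proof (intro conjI allI impI)
  show "h \<in> ua_generated ar S (\<phi> ` A) \<rightarrow> ua_generated ar T (\<psi> ` A)"
  proof
    fix y assume "y \<in> ua_generated ar S (\<phi> ` A)"
    then obtain t where t: "t \<in> wf_terms ar A" "y = eval_trm (ua_ops S) \<phi> t"
      unfolding ua_generated_eq_term_values[OF S \<phi>] term_values_def by blast
    have "h y = eval_trm (ua_ops T) (\<lambda>a. h (\<phi> a)) t"
      using t \<phi> hom_eval_trm[OF hom S] unfolding wf_terms_def by blast
    also have "\<dots> = eval_trm (ua_ops T) \<psi> t"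
      using t h\<phi> unfolding wf_terms_def by (auto intro: eval_trm_cong)
    finally show "h y \<in> ua_generated ar T (\<psi> ` A)"
      unfolding ua_generated_eq_term_values[OF T \<psi>] term_values_def using t by blast
  qed
  show "h (ua_ops S f xs) = ua_ops T f (map h xs)"
    if "set xs \<subseteq> ua_generated ar S (\<phi> ` A) \<and> length xs = ar f" for f xs
    using that hom ua_generated_subset[OF S \<phi>] unfolding ua_hom_def by (meson subset_trans)
qed

section \<open>The free pro-U algebra\<close>

locale pseudovar =
  fixes ar :: "'f \<Rightarrow> nat" and U :: "('f, nat) alg set"
  assumes pseudovariety: "pseudovariety ar U"
begin

lemma member_is_alg: "S \<in> U \<Longrightarrow> is_alg ar S"
  and member_finite: "S \<in> U \<Longrightarrow> finite (ua_carrier S)"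
  using pseudovariety[unfolded pseudovariety_def, THEN conjunct2, THEN conjunct1] by blast+

lemma hom_image_member:
  "S \<in> U \<Longrightarrow> is_alg ar T \<Longrightarrow> ua_hom ar S T h \<Longrightarrow> h ` ua_carrier S = ua_carrier T \<Longrightarrow> T \<in> U"
  using pseudovariety[unfolded pseudovariety_def, THEN conjunct2, THEN conjunct2, THEN conjunct1]
  by blast

lemma subalg_member:
  "S \<in> U \<Longrightarrow> ua_carrier T \<subseteq> ua_carrier S \<Longrightarrow> ua_closed ar S (ua_carrier T) \<Longrightarrow>
   (\<And>f xs. set xs \<subseteq> ua_carrier T \<Longrightarrow> length xs = ar f \<Longrightarrow> ua_ops T f xs = ua_ops S f xs) \<Longrightarrow>
   T \<in> U"
  using pseudovariety[unfolded pseudovariety_def,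
      THEN conjunct2, THEN conjunct2, THEN conjunct2, THEN conjunct1] by blast

lemma gen_subalg_member:
  assumes "S \<in> U" "X \<subseteq> ua_carrier S"
  shows "gen_subalg ar S X \<in> U"
  by (rule subalg_member[OF assms(1)])
    (simp_all add: ua_generated_subset[OF member_is_alg[OF assms(1)] assms(2)] ua_generated_closed)

lemma prod_copy_member:
  "finite (I :: nat set) \<Longrightarrow> (\<And>i. i \<in> I \<Longrightarrow> Sf i \<in> U) \<Longrightarrow> is_alg ar T \<Longrightarrow>
   ua_hom ar (prod_alg I Sf) T h \<Longrightarrow> bij_betw h (ua_carrier (prod_alg I Sf)) (ua_carrier T) \<Longrightarrow> T \<in> U"
  using pseudovariety[unfolded pseudovariety_def,
      THEN conjunct2, THEN conjunct2, THEN conjunct2, THEN conjunct2] by blast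

lemma Omega_idx_D:
  assumes "k \<in> Omega_idx ar U A"
  shows "fst k \<in> U" "snd k \<in> A \<rightarrow>\<^sub>E ua_carrier (fst k)"
    "ua_generated ar (fst k) (snd k ` A) = ua_carrier (fst k)"
  using assms unfolding Omega_idx_def by auto

lemma Omega_idx_is_alg: "k \<in> Omega_idx ar U A \<Longrightarrow> is_alg ar (fst k)"
  using Omega_idx_D(1) member_is_alg by blast

lemma gen_subalg_idx:
  assumes S: "S \<in> U" and \<psi>: "\<psi> ` B \<subseteq> ua_carrier S"
  shows "(gen_subalg ar S (\<psi> ` B), restrict \<psi> B) \<in> Omega_idx ar U B"
proof -
  have SA: "is_alg ar S" using S member_is_alg by blast
  let ?G = "gen_subalg ar S (\<psi> ` B)"
  have GU: "?G \<in> U" using gen_subalg_member[OF S \<psi>] .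
  have gen: "\<psi> ` B \<subseteq> ua_carrier ?G"
    unfolding gen_subalg_simps ua_generated_def by auto
  then have "ua_generated ar ?G (\<psi> ` B) = term_values ar ?G \<psi> B"
    by (rule ua_generated_eq_term_values[OF member_is_alg[OF GU]])
  also have "\<dots> = ua_carrier ?G"
    unfolding term_values_def gen_subalg_simps ua_generated_eq_term_values[OF SA \<psi>] ..
  finally have "ua_generated ar ?G (restrict \<psi> B ` B) = ua_carrier ?G" by simp
  then show ?thesis using GU gen unfolding Omega_idx_def by auto
qed

lemma Omega_op_apply:
  "k \<in> Omega_idx ar U A \<Longrightarrow> Omega_op ar U A f xs k = ua_ops (fst k) f (map (\<lambda>x. x k) xs)"
  unfolding Omega_op_def by simp

lemma Omega_PiE: "x \<in> Omega ar U A \<Longrightarrow> x \<in> PiE (Omega_idx ar U A) (\<lambda>k. ua_carrier (fst k))"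
  unfolding Omega_def by blast

lemma Omega_apply_in: "x \<in> Omega ar U A \<Longrightarrow> k \<in> Omega_idx ar U A \<Longrightarrow> x k \<in> ua_carrier (fst k)"
  using Omega_PiE by blast

lemma Omega_compat:
  assumes "x \<in> Omega ar U A" "k \<in> Omega_idx ar U A" "l \<in> Omega_idx ar U A"
    "ua_hom ar (fst k) (fst l) h" "\<forall>a\<in>A. h (snd k a) = snd l a"
  shows "h (x k) = x l"
proof -
  obtain S \<phi> T \<psi> where kl: "k = (S, \<phi>)" "l = (T, \<psi>)" by (cases k, cases l) blast
  from assms(1) have "\<forall>S \<phi> T \<psi> h. (S, \<phi>) \<in> Omega_idx ar U A \<and> (T, \<psi>) \<in> Omega_idx ar U A \<and>
      ua_hom ar S T h \<and> (\<forall>a\<in>A. h (\<phi> a) = \<psi> a) \<longrightarrow> h (x (S, \<phi>)) = x (T, \<psi>)"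
    unfolding Omega_def by blast
  then show ?thesis using assms(2-5) unfolding kl fst_conv snd_conv by blast
qed

lemma OmegaI:
  assumes "x \<in> PiE (Omega_idx ar U A) (\<lambda>k. ua_carrier (fst k))"
    "\<And>k l h. k \<in> Omega_idx ar U A \<Longrightarrow> l \<in> Omega_idx ar U A \<Longrightarrow> ua_hom ar (fst k) (fst l) h \<Longrightarrow>
      \<forall>a\<in>A. h (snd k a) = snd l a \<Longrightarrow> h (x k) = x l"
  shows "x \<in> Omega ar U A"
  unfolding Omega_def
proof (intro CollectI conjI allI impI)
  fix S \<phi> T \<psi> h
  assume "(S, \<phi>) \<in> Omega_idx ar U A \<and> (T, \<psi>) \<in> Omega_idx ar U A \<and> ua_hom ar S T h \<and>
    (\<forall>a\<in>A. h (\<phi> a) = \<psi> a)"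
  then show "h (x (S, \<phi>)) = x (T, \<psi>)" using assms(2)[of "(S, \<phi>)" "(T, \<psi>)" h] by simp
qed (rule assms(1))

lemma Omega_op_in:
  assumes xs: "set xs \<subseteq> Omega ar U A" "length xs = ar f"
  shows "Omega_op ar U A f xs \<in> Omega ar U A"
proof (rule OmegaI)
  have "ua_ops (fst k) f (map (\<lambda>x. x k) xs) \<in> ua_carrier (fst k)" if k: "k \<in> Omega_idx ar U A" for k
  proof -
    have "set (map (\<lambda>x. x k) xs) \<subseteq> ua_carrier (fst k)"
      using xs(1) Omega_apply_in[OF _ k] by auto
    then show ?thesis
      using Omega_idx_is_alg[OF k] xs(2) unfolding is_alg_def by auto
  qed
  then show "Omega_op ar U A f xs \<in> (\<Pi>\<^sub>E k\<in>Omega_idx ar U A. ua_carrier (fst k))"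
    unfolding Omega_op_def by auto
next
  fix k l h assume kl: "k \<in> Omega_idx ar U A" "l \<in> Omega_idx ar U A"
    and h: "ua_hom ar (fst k) (fst l) h" "\<forall>a\<in>A. h (snd k a) = snd l a"
  have "set (map (\<lambda>x. x k) xs) \<subseteq> ua_carrier (fst k)"
    using xs(1) Omega_apply_in[OF _ kl(1)] by auto
  then have "h (ua_ops (fst k) f (map (\<lambda>x. x k) xs)) = ua_ops (fst l) f (map (\<lambda>x. h (x k)) xs)"
    using h(1) xs(2) unfolding ua_hom_def by (simp add: o_def)
  also have "map (\<lambda>x. h (x k)) xs = map (\<lambda>x. x l) xs"
    using xs(1) Omega_compat[OF _ kl h] by auto
  finally show "h (Omega_op ar U A f xs k) = Omega_op ar U A f xs l"
    using kl by (simp add: Omega_op_apply)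
qed

lemma Omega_is_alg: "is_alg ar (Omega_alg ar U A)"
  unfolding is_alg_def Omega_alg_def ua_carrier_def ua_ops_def using Omega_op_in by auto

lemma Omega_alg_simps [simp]:
  "ua_carrier (Omega_alg ar U A) = Omega ar U A" "ua_ops (Omega_alg ar U A) = Omega_op ar U A"
  unfolding Omega_alg_def ua_carrier_def ua_ops_def by auto

lemma Omega_gen_in: "a \<in> A \<Longrightarrow> Omega_gen ar U A a \<in> Omega ar U A"
  unfolding Omega_def Omega_gen_def using Omega_idx_D(2) by (auto simp: Omega_idx_def)

lemma eval_trm_Omega_in:
  "wf_trm ar t \<Longrightarrow> \<forall>x\<in>trm_vars t. \<rho> x \<in> Omega ar U A \<Longrightarrow> eval_trm (Omega_op ar U A) \<rho> t \<in> Omega ar U A"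
  using eval_trm_in_carrier[OF Omega_is_alg] by simp

lemma eval_trm_Omega_apply:
  assumes "k \<in> Omega_idx ar U A"
  shows "eval_trm (Omega_op ar U A) \<rho> t k = eval_trm (ua_ops (fst k)) (\<lambda>x. \<rho> x k) t"
proof (induction t)
  case (App f ts)
  have "eval_trm (Omega_op ar U A) \<rho> (App f ts) k
      = ua_ops (fst k) f (map (\<lambda>x. x k) (map (eval_trm (Omega_op ar U A) \<rho>) ts))"
    using assms by (simp only: eval_trm.simps Omega_op_apply)
  also have "map (\<lambda>x. x k) (map (eval_trm (Omega_op ar U A) \<rho>) ts)
      = map (eval_trm (ua_ops (fst k)) (\<lambda>x. \<rho> x k)) ts"
    using App by auto
  finally show ?case by (simp only: eval_trm.simps)
qed simp

lemma Omega_trm_in: "t \<in> wf_terms ar A \<Longrightarrow> Omega_trm ar U A t \<in> Omega ar U A"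
  unfolding Omega_trm_def wf_terms_def by (auto intro!: eval_trm_Omega_in Omega_gen_in)

lemma Omega_trm_apply:
  assumes "t \<in> wf_terms ar A" "k \<in> Omega_idx ar U A"
  shows "Omega_trm ar U A t k = eval_trm (ua_ops (fst k)) (snd k) t"
  unfolding Omega_trm_def eval_trm_Omega_apply[OF assms(2)] using assms
  by (intro eval_trm_cong) (auto simp: Omega_gen_def wf_terms_def)

lemma Omega_trm_App: "Omega_trm ar U A (App f ts) = Omega_op ar U A f (map (Omega_trm ar U A) ts)"
  unfolding Omega_trm_def by simp

end

lemma ua_hom_comp:
  assumes g: "ua_hom ar S T g" and h: "ua_hom ar T R h"
  shows "ua_hom ar S R (h \<circ> g)"
  unfolding ua_hom_def
proof (intro conjI allI impI)
  show "h \<circ> g \<in> ua_carrier S \<rightarrow> ua_carrier R" using g h unfolding ua_hom_def by auto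
  fix f xs assume xs: "set xs \<subseteq> ua_carrier S \<and> length xs = ar f"
  then have "set (map g xs) \<subseteq> ua_carrier T" using g unfolding ua_hom_def by auto
  then show "(h \<circ> g) (ua_ops S f xs) = ua_ops R f (map (h \<circ> g) xs)"
    using g h xs unfolding ua_hom_def by simp
qed

lemma ua_hom_inv_into:
  assumes "ua_hom ar S T h" "bij_betw h (ua_carrier S) (ua_carrier T)" "is_alg ar S"
  shows "ua_hom ar T S (inv_into (ua_carrier S) h)"
  unfolding ua_hom_def
proof (intro conjI allI impI)
  let ?g = "inv_into (ua_carrier S) h"
  show "?g \<in> ua_carrier T \<rightarrow> ua_carrier S"
    using bij_betw_inv_into[OF assms(2)] by (auto simp: bij_betw_def)
  fix f ys assume ys: "set ys \<subseteq> ua_carrier T \<and> length ys = ar f"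
  then have gys: "set (map ?g ys) \<subseteq> ua_carrier S"
    using bij_betw_inv_into[OF assms(2)] by (auto simp: bij_betw_def)
  have "map h (map ?g ys) = ys"
    unfolding map_map using ys bij_betw_inv_into_right[OF assms(2)] by (intro map_idI) auto
  then have "h (ua_ops S f (map ?g ys)) = ua_ops T f ys"
    using assms(1) gys ys unfolding ua_hom_def by (metis length_map)
  moreover have "ua_ops S f (map ?g ys) \<in> ua_carrier S"
    using assms(3) gys ys unfolding is_alg_def by simp
  ultimately show "?g (ua_ops T f ys) = ua_ops S f (map ?g ys)"
    using bij_betw_inv_into_left[OF assms(2)] by metis
qed

lemma ua_hom_restrict_gen_subalg:
  "ua_hom ar S T h \<Longrightarrow> is_alg ar S \<Longrightarrow> X \<subseteq> ua_carrier S \<Longrightarrow> ua_hom ar (gen_subalg ar S X) T h"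
  using ua_generated_subset unfolding ua_hom_def gen_subalg_simps by (meson Pi_anti_mono subsetD subset_trans)

lemma prod_alg_simps:
  "ua_carrier (prod_alg I Sf) = PiE I (\<lambda>i. ua_carrier (Sf i))"
  "ua_ops (prod_alg I Sf) f xs = (\<lambda>i\<in>I. ua_ops (Sf i) f (map (\<lambda>x. x i) xs))"
  unfolding prod_alg_def ua_carrier_def ua_ops_def by auto

lemma prod_alg_is_alg:
  assumes "\<And>i. i \<in> I \<Longrightarrow> is_alg ar (Sf i)"
  shows "is_alg ar (prod_alg I Sf)"
  unfolding is_alg_def prod_alg_simps
proof (intro allI impI)
  fix f xs assume xs: "set xs \<subseteq> PiE I (\<lambda>i. ua_carrier (Sf i)) \<and> length xs = ar f"
  have "ua_ops (Sf i) f (map (\<lambda>x. x i) xs) \<in> ua_carrier (Sf i)" if i: "i \<in> I" for i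
  proof -
    have "set (map (\<lambda>x. x i) xs) \<subseteq> ua_carrier (Sf i)" using xs i by (auto simp: PiE_iff)
    then show ?thesis using assms[OF i] xs unfolding is_alg_def by auto
  qed
  then show "(\<lambda>i\<in>I. ua_ops (Sf i) f (map (\<lambda>x. x i) xs)) \<in> PiE I (\<lambda>i. ua_carrier (Sf i))"
    by auto
qed

lemma ua_hom_proj: "i \<in> I \<Longrightarrow> ua_hom ar (prod_alg I Sf) (Sf i) (\<lambda>x. x i)"
  unfolding ua_hom_def prod_alg_simps by (auto simp: o_def)

definition transport_alg :: "('a \<Rightarrow> 'b) \<Rightarrow> ('f, 'a) alg \<Rightarrow> ('f, 'b) alg" where
  "transport_alg e S = (e ` ua_carrier S, \<lambda>f ys. e (ua_ops S f (map (inv_into (ua_carrier S) e) ys)))"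

lemma transport_alg:
  assumes S: "is_alg ar S" and e: "inj_on e (ua_carrier S)"
  shows "is_alg ar (transport_alg e S)" "ua_hom ar S (transport_alg e S) e"
    "bij_betw e (ua_carrier S) (ua_carrier (transport_alg e S))"
proof -
  have simps: "ua_carrier (transport_alg e S) = e ` ua_carrier S"
    "ua_ops (transport_alg e S) f ys = e (ua_ops S f (map (inv_into (ua_carrier S) e) ys))" for f ys
    unfolding transport_alg_def ua_carrier_def ua_ops_def by auto
  show "bij_betw e (ua_carrier S) (ua_carrier (transport_alg e S))"
    using e unfolding simps bij_betw_def by simp
  show "is_alg ar (transport_alg e S)"
    unfolding is_alg_def simps
  proof (intro allI impI)
    fix f ys assume ys: "set ys \<subseteq> e ` ua_carrier S \<and> length ys = ar f"
    then have "set (map (inv_into (ua_carrier S) e) ys) \<subseteq> ua_carrier S"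
      by (auto intro: inv_into_into)
    then show "e (ua_ops S f (map (inv_into (ua_carrier S) e) ys)) \<in> e ` ua_carrier S"
      using S ys unfolding is_alg_def by auto
  qed
  have "map (inv_into (ua_carrier S) e) (map e xs) = xs" if "set xs \<subseteq> ua_carrier S" for xs
    using that e by (induction xs) auto
  then show "ua_hom ar S (transport_alg e S) e"
    unfolding ua_hom_def simps by auto
qed

lemma inj_on_map_sorted_list_of_set:
  assumes "finite I"
  shows "inj_on (\<lambda>x. map x (sorted_list_of_set I)) (PiE I C)"
proof (rule inj_onI)
  fix x y assume "x \<in> PiE I C" "y \<in> PiE I C" "map x (sorted_list_of_set I) = map y (sorted_list_of_set I)"
  then show "x = y" using assms by (intro PiE_ext) (auto simp: map_eq_conv)
qed

context pseudovar
begin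

lemma prod_copy_exists:
  assumes "finite (I :: nat set)" "\<And>i. i \<in> I \<Longrightarrow> Sf i \<in> U"
  obtains T e where "T \<in> U" "ua_hom ar (prod_alg I Sf) T e"
    "bij_betw e (ua_carrier (prod_alg I Sf)) (ua_carrier T)"
proof -
  let ?P = "prod_alg I Sf"
  let ?e = "\<lambda>x. to_nat (map x (sorted_list_of_set I))"
  have P: "is_alg ar ?P" using assms(2) member_is_alg by (intro prod_alg_is_alg) blast
  have "inj_on ?e (ua_carrier ?P)"
    unfolding prod_alg_simps
    by (rule comp_inj_on[OF inj_on_map_sorted_list_of_set[OF assms(1)], unfolded o_def])
      (simp add: inj_on_def)
  note T = transport_alg[OF P this]
  then have "transport_alg ?e ?P \<in> U" using prod_copy_member assms by blast
  with T show ?thesis using that by blast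
qed

lemma Omega_idx_directed:
  assumes "finite K" "K \<subseteq> Omega_idx ar U A"
  obtains k0 where "k0 \<in> Omega_idx ar U A"
    "\<And>k. k \<in> K \<Longrightarrow> \<exists>h. ua_hom ar (fst k0) (fst k) h \<and> (\<forall>a\<in>A. h (snd k0 a) = snd k a)"
proof -
  obtain ks where ks: "set ks = K" using finite_list[OF assms(1)] by blast
  define I where "I = {..<length ks}"
  define Sf where "Sf i = fst (ks ! i)" for i
  have ks_idx: "ks ! i \<in> Omega_idx ar U A" if "i \<in> I" for i
    using that assms(2) ks unfolding I_def by auto
  have Sf: "Sf i \<in> U" "is_alg ar (Sf i)" if "i \<in> I" for i
    using Omega_idx_D(1)[OF ks_idx[OF that]] member_is_alg unfolding Sf_def by blast+
  obtain T e where T: "T \<in> U" and e: "ua_hom ar (prod_alg I Sf) T e"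
    "bij_betw e (ua_carrier (prod_alg I Sf)) (ua_carrier T)"
    using prod_copy_exists[of I Sf] Sf(1) unfolding I_def by blast
  define \<phi> where "\<phi> a = e (\<lambda>i\<in>I. snd (ks ! i) a)" for a
  have \<phi>: "\<phi> ` A \<subseteq> ua_carrier T"
    using Omega_idx_D(2)[OF ks_idx] e(2) unfolding \<phi>_def bij_betw_def prod_alg_simps Sf_def
    by (auto simp: PiE_iff)
  define k0 where "k0 = (gen_subalg ar T (\<phi> ` A), restrict \<phi> A)"
  show ?thesis
  proof (rule that)
    show "k0 \<in> Omega_idx ar U A" unfolding k0_def using gen_subalg_idx[OF T \<phi>] .
    fix k assume "k \<in> K"
    then obtain i where i: "i \<in> I" "k = ks ! i" using ks unfolding I_def by (auto simp: in_set_conv_nth)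
    let ?h = "(\<lambda>x. x i) \<circ> inv_into (ua_carrier (prod_alg I Sf)) e"
    have "ua_hom ar T (Sf i) ?h"
      by (rule ua_hom_comp[OF ua_hom_inv_into[OF e prod_alg_is_alg[OF Sf(2)]] ua_hom_proj[OF i(1)]])
    then have "ua_hom ar (fst k0) (fst k) ?h"
      unfolding k0_def i(2) Sf_def fst_conv using member_is_alg[OF T] \<phi>
      by (intro ua_hom_restrict_gen_subalg)
    moreover have "\<forall>a\<in>A. ?h (snd k0 a) = snd k a"
      using i Omega_idx_D(2)[OF ks_idx] bij_betw_inv_into_left[OF e(2)]
      unfolding k0_def \<phi>_def prod_alg_simps Sf_def by (auto simp: PiE_iff)
    ultimately show "\<exists>h. ua_hom ar (fst k0) (fst k) h \<and> (\<forall>a\<in>A. h (snd k0 a) = snd k a)" by blast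
  qed
qed

lemma Omega_idx_carrier:
  assumes k: "k \<in> Omega_idx ar U A"
  shows "ua_carrier (fst k) = eval_trm (ua_ops (fst k)) (snd k) ` wf_terms ar A"
proof -
  have gen: "snd k ` A \<subseteq> ua_carrier (fst k)" using Omega_idx_D(2)[OF k] by auto
  show ?thesis
    using Omega_idx_D(3)[OF k] ua_generated_eq_term_values[OF Omega_idx_is_alg[OF k] gen]
    unfolding term_values_def by simp
qed

lemma hom_eval_idx:
  assumes "k \<in> Omega_idx ar U A" "ua_hom ar (fst k) (fst l) h" "\<forall>a\<in>A. h (snd k a) = snd l a"
    and t: "t \<in> wf_terms ar A"
  shows "h (eval_trm (ua_ops (fst k)) (snd k) t) = eval_trm (ua_ops (fst l)) (snd l) t"
proof -
  have "\<forall>x\<in>trm_vars t. snd k x \<in> ua_carrier (fst k)"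
    using t Omega_idx_D(2)[OF assms(1)] unfolding wf_terms_def by auto
  then have "h (eval_trm (ua_ops (fst k)) (snd k) t) = eval_trm (ua_ops (fst l)) (\<lambda>x. h (snd k x)) t"
    using hom_eval_trm[OF assms(2) Omega_idx_is_alg[OF assms(1)]] t unfolding wf_terms_def by blast
  also have "\<dots> = eval_trm (ua_ops (fst l)) (snd l) t"
    using assms(3) t unfolding wf_terms_def by (intro eval_trm_cong) auto
  finally show ?thesis .
qed

lemma Omega_approx_by_term:
  assumes K: "finite K" "K \<subseteq> Omega_idx ar U A" and x: "x \<in> Omega ar U A"
  obtains t where "t \<in> wf_terms ar A" "\<And>k. k \<in> K \<Longrightarrow> Omega_trm ar U A t k = x k"
proof -
  obtain k0 where k0: "k0 \<in> Omega_idx ar U A"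
    and dom: "\<And>k. k \<in> K \<Longrightarrow> \<exists>h. ua_hom ar (fst k0) (fst k) h \<and> (\<forall>a\<in>A. h (snd k0 a) = snd k a)"
    using Omega_idx_directed[OF K] by blast
  obtain t where t: "t \<in> wf_terms ar A" "x k0 = eval_trm (ua_ops (fst k0)) (snd k0) t"
    using Omega_apply_in[OF x k0] Omega_idx_carrier[OF k0] by blast
  have "Omega_trm ar U A t k = x k" if k: "k \<in> K" for k
  proof -
    obtain h where h: "ua_hom ar (fst k0) (fst k) h" "\<forall>a\<in>A. h (snd k0 a) = snd k a"
      using dom[OF k] by blast
    have kI: "k \<in> Omega_idx ar U A" using K(2) k by blast
    have "x k = h (x k0)" using Omega_compat[OF x k0 kI h] by simp
    also have "\<dots> = eval_trm (ua_ops (fst k)) (snd k) t" using hom_eval_idx[OF k0 h t(1)] t(2) by simp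
    also have "\<dots> = Omega_trm ar U A t k" using Omega_trm_apply[OF t(1) kI] by simp
    finally show ?thesis by simp
  qed
  then show ?thesis using that t(1) by blast
qed

end

context pseudovar
begin

text \<open>The continuous homomorphism \<open>Omega_lift \<tau> B A : \<Omega>\<^sub>B U \<rightarrow> \<Omega>\<^sub>A U\<close> sending each generator
\<open>b\<close> to \<open>\<tau> b\<close>: its coordinate at \<open>(S, \<phi>)\<close> is the coordinate of the argument at the subalgebra
of \<open>S\<close> generated by the values \<open>\<tau> b (S, \<phi>)\<close>.\<close>

definition lift_idx :: "('v \<Rightarrow> ((('f, nat) alg \<times> ('w \<Rightarrow> nat)) \<Rightarrow> nat)) \<Rightarrow> 'v set
    \<Rightarrow> (('f, nat) alg \<times> ('w \<Rightarrow> nat)) \<Rightarrow> (('f, nat) alg \<times> ('v \<Rightarrow> nat))" where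
  "lift_idx \<tau> B k = (gen_subalg ar (fst k) ((\<lambda>b. \<tau> b k) ` B), restrict (\<lambda>b. \<tau> b k) B)"

definition Omega_lift :: "('v \<Rightarrow> ((('f, nat) alg \<times> ('w \<Rightarrow> nat)) \<Rightarrow> nat)) \<Rightarrow> 'v set \<Rightarrow> 'w set
    \<Rightarrow> ((('f, nat) alg \<times> ('v \<Rightarrow> nat)) \<Rightarrow> nat) \<Rightarrow> ((('f, nat) alg \<times> ('w \<Rightarrow> nat)) \<Rightarrow> nat)" where
  "Omega_lift \<tau> B A x = (\<lambda>k\<in>Omega_idx ar U A. x (lift_idx \<tau> B k))"

lemma values_in_carrier:
  "\<forall>b\<in>B. \<tau> b \<in> Omega ar U A \<Longrightarrow> k \<in> Omega_idx ar U A \<Longrightarrow> (\<lambda>b. \<tau> b k) ` B \<subseteq> ua_carrier (fst k)"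
  using Omega_apply_in by blast

lemma lift_idx_in:
  "\<forall>b\<in>B. \<tau> b \<in> Omega ar U A \<Longrightarrow> k \<in> Omega_idx ar U A \<Longrightarrow> lift_idx \<tau> B k \<in> Omega_idx ar U B"
  unfolding lift_idx_def
  using gen_subalg_idx[OF Omega_idx_D(1) values_in_carrier] by blast

lemma Omega_lift_in:
  assumes \<tau>: "\<forall>b\<in>B. \<tau> b \<in> Omega ar U A" and x: "x \<in> Omega ar U B"
  shows "Omega_lift \<tau> B A x \<in> Omega ar U A"
proof (rule OmegaI)
  have "x (lift_idx \<tau> B k) \<in> ua_carrier (fst k)" if k: "k \<in> Omega_idx ar U A" for k
  proof -
    have "x (lift_idx \<tau> B k) \<in> ua_carrier (fst (lift_idx \<tau> B k))"
      using Omega_apply_in[OF x lift_idx_in[OF \<tau> k]] .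
    also have "\<dots> \<subseteq> ua_carrier (fst k)"
      unfolding lift_idx_def fst_conv gen_subalg_simps
      using ua_generated_subset[OF Omega_idx_is_alg[OF k] values_in_carrier[OF \<tau> k]] .
    finally show ?thesis .
  qed
  then show "Omega_lift \<tau> B A x \<in> (\<Pi>\<^sub>E k\<in>Omega_idx ar U A. ua_carrier (fst k))"
    unfolding Omega_lift_def by auto
next
  fix k l h assume kl: "k \<in> Omega_idx ar U A" "l \<in> Omega_idx ar U A"
    and h: "ua_hom ar (fst k) (fst l) h" "\<forall>a\<in>A. h (snd k a) = snd l a"
  have h\<tau>: "h (\<tau> b k) = \<tau> b l" if "b \<in> B" for b
    using Omega_compat[OF _ kl h] \<tau> that by blast
  have "ua_hom ar (fst (lift_idx \<tau> B k)) (fst (lift_idx \<tau> B l)) h"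
    unfolding lift_idx_def fst_conv
    by (rule hom_gen_subalg[OF h(1) Omega_idx_is_alg[OF kl(1)] Omega_idx_is_alg[OF kl(2)]
          values_in_carrier[OF \<tau> kl(1)] values_in_carrier[OF \<tau> kl(2)] h\<tau>])
  moreover have "\<forall>b\<in>B. h (snd (lift_idx \<tau> B k) b) = snd (lift_idx \<tau> B l) b"
    unfolding lift_idx_def using h\<tau> by simp
  ultimately have "h (x (lift_idx \<tau> B k)) = x (lift_idx \<tau> B l)"
    using Omega_compat[OF x lift_idx_in[OF \<tau> kl(1)] lift_idx_in[OF \<tau> kl(2)]] by blast
  then show "h (Omega_lift \<tau> B A x k) = Omega_lift \<tau> B A x l"
    unfolding Omega_lift_def using kl by simp
qed

lemma Omega_lift_hom:
  assumes \<tau>: "\<forall>b\<in>B. \<tau> b \<in> Omega ar U A"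
  shows "ua_hom ar (Omega_alg ar U B) (Omega_alg ar U A) (Omega_lift \<tau> B A)"
  unfolding ua_hom_def Omega_alg_simps
proof (intro conjI allI impI)
  show "Omega_lift \<tau> B A \<in> Omega ar U B \<rightarrow> Omega ar U A" using Omega_lift_in[OF \<tau>] by blast
  fix f xs
  have "Omega_lift \<tau> B A (Omega_op ar U B f xs) k = Omega_op ar U A f (map (Omega_lift \<tau> B A) xs) k"
    if k: "k \<in> Omega_idx ar U A" for k
    using Omega_op_apply[OF lift_idx_in[OF \<tau> k]] Omega_op_apply[OF k] k
    by (simp add: Omega_lift_def lift_idx_def o_def)
  moreover have "Omega_lift \<tau> B A (Omega_op ar U B f xs) k = Omega_op ar U A f (map (Omega_lift \<tau> B A) xs) k"
    if "k \<notin> Omega_idx ar U A" for k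
    using that by (simp add: Omega_lift_def Omega_op_def)
  ultimately show "Omega_lift \<tau> B A (Omega_op ar U B f xs) = Omega_op ar U A f (map (Omega_lift \<tau> B A) xs)"
    by blast
qed

lemma Omega_lift_gen:
  assumes \<tau>: "\<forall>b\<in>B. \<tau> b \<in> Omega ar U A" and b: "b \<in> B"
  shows "Omega_lift \<tau> B A (Omega_gen ar U B b) = \<tau> b"
proof
  fix k show "Omega_lift \<tau> B A (Omega_gen ar U B b) k = \<tau> b k"
  proof (cases "k \<in> Omega_idx ar U A")
    case True
    then have "Omega_lift \<tau> B A (Omega_gen ar U B b) k = Omega_gen ar U B b (lift_idx \<tau> B k)"
      by (simp only: Omega_lift_def restrict_apply')
    also have "\<dots> = snd (lift_idx \<tau> B k) b"
      using lift_idx_in[OF \<tau> True] by (simp only: Omega_gen_def restrict_apply')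
    also have "\<dots> = \<tau> b k"
      using b by (simp only: lift_idx_def snd_conv restrict_apply')
    finally show ?thesis .
  next
    case False
    have "\<tau> b \<in> PiE (Omega_idx ar U A) (\<lambda>k. ua_carrier (fst k))" using Omega_PiE \<tau> b by blast
    then have "\<tau> b k = undefined" using False by (rule PiE_arb)
    then show ?thesis using False by (simp add: Omega_lift_def)
  qed
qed

lemma hom_Omega_trm:
  assumes h: "ua_hom ar (Omega_alg ar U B) T h" and t: "t \<in> wf_terms ar B"
  shows "h (Omega_trm ar U B t) = eval_trm (ua_ops T) (\<lambda>x. h (Omega_gen ar U B x)) t"
proof -
  have wf: "wf_trm ar t" using t by (simp add: wf_terms_def)
  have "\<forall>x\<in>trm_vars t. Omega_gen ar U B x \<in> ua_carrier (Omega_alg ar U B)"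
    using t unfolding wf_terms_def by (auto intro!: Omega_gen_in)
  then show ?thesis using hom_eval_trm[OF h Omega_is_alg wf] unfolding Omega_trm_def by simp
qed

lemma Omega_lift_Omega_trm:
  assumes \<tau>: "\<forall>b\<in>B. \<tau> b \<in> Omega ar U A" and t: "t \<in> wf_terms ar B"
  shows "Omega_lift \<tau> B A (Omega_trm ar U B t) = eval_trm (Omega_op ar U A) \<tau> t"
  unfolding hom_Omega_trm[OF Omega_lift_hom[OF \<tau>] t] Omega_alg_simps
  using t Omega_lift_gen[OF \<tau>] unfolding wf_terms_def by (intro eval_trm_cong) auto

end

section \<open>The topology of the free pro-U algebra\<close>

lemma product_topology_discrete_finite:
  assumes "finite J"
  shows "product_topology (\<lambda>j. discrete_topology (C j)) J = discrete_topology (PiE J C)"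
proof -
  have "openin (product_topology (\<lambda>j. discrete_topology (C j)) J) {y}" if "y \<in> PiE J C" for y
  proof -
    have "{y} = PiE J (\<lambda>j. {y j})" using that PiE_singleton[of y J] by (simp add: PiE_iff)
    then show ?thesis using that assms by (simp add: openin_PiE_gen PiE_iff)
  qed
  then show ?thesis by (subst eq_commute) (simp add: discrete_topology_unique)
qed

lemma continuous_map_restrict_product:
  assumes "J \<subseteq> I"
  shows "continuous_map (product_topology X I) (product_topology X J) (\<lambda>x. restrict x J)"
  unfolding continuous_map_componentwise
proof (intro conjI ballI)
  fix k assume "k \<in> J"
  then show "continuous_map (product_topology X I) (X k) (\<lambda>x. restrict x J k)"
    using assms by (auto intro: continuous_map_eq[OF continuous_map_product_projection])
qed auto

lemma continuous_map_finite_dependence: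
  fixes C :: "'i \<Rightarrow> 'a set" and I :: "'i set" and S :: "('i \<Rightarrow> 'a) set"
  defines "X \<equiv> subtopology (product_topology (\<lambda>i. discrete_topology (C i)) I) S"
  assumes J: "finite J" "J \<subseteq> I" and F: "F \<in> topspace X \<rightarrow> Y"
    and dep: "\<And>x y. x \<in> topspace X \<Longrightarrow> y \<in> topspace X \<Longrightarrow> (\<forall>j\<in>J. x j = y j) \<Longrightarrow> F x = F y"
  shows "continuous_map X (discrete_topology Y) F"
proof -
  let ?r = "\<lambda>x. restrict x J" and ?T = "topspace X"
  define G where "G z = F (SOME x. x \<in> ?T \<and> ?r x = z)" for z
  have "continuous_map X (discrete_topology (PiE J C)) ?r"
    unfolding X_def product_topology_discrete_finite[OF J(1), symmetric]
    by (intro continuous_map_from_subtopology continuous_map_restrict_product J(2))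
  moreover have "?r ` ?T \<subseteq> PiE J C"
    using J(2) unfolding X_def by (auto simp: PiE_iff)
  ultimately have "continuous_map X (discrete_topology (?r ` ?T)) ?r"
    using continuous_map_in_subtopology[of X "discrete_topology (PiE J C)" "?r ` ?T" ?r]
    by (simp add: Int_absorb1)
  moreover have rep: "(SOME x. x \<in> ?T \<and> ?r x = ?r y) \<in> ?T \<and> ?r (SOME x. x \<in> ?T \<and> ?r x = ?r y) = ?r y"
    if "y \<in> ?T" for y
    using someI_ex[of "\<lambda>x. x \<in> ?T \<and> ?r x = ?r y"] that by blast
  then have "continuous_map (discrete_topology (?r ` ?T)) (discrete_topology Y) G"
    using F unfolding G_def by auto
  ultimately have "continuous_map X (discrete_topology Y) (G \<circ> ?r)"
    by (rule continuous_map_compose)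
  moreover have "(G \<circ> ?r) x = F x" if "x \<in> ?T" for x
    unfolding G_def o_def using rep[OF that] that
    by (intro dep) (auto dest: fun_cong[where x = j for j] simp: restrict_def split: if_splits)
  ultimately show ?thesis by (rule continuous_map_eq)
qed

context pseudovar
begin

abbreviation idx_product_top :: "'v set \<Rightarrow> ((('f, nat) alg \<times> ('v \<Rightarrow> nat)) \<Rightarrow> nat) topology" where
  "idx_product_top A \<equiv> product_topology (\<lambda>k. discrete_topology (ua_carrier (fst k))) (Omega_idx ar U A)"

lemma Omega_subset_topspace: "Omega ar U A \<subseteq> topspace (idx_product_top A)"
  unfolding topspace_product_topology topspace_discrete_topology using Omega_PiE by blast

lemma topspace_Omega_top [simp]: "topspace (Omega_top ar U A) = Omega ar U A"
  using Omega_subset_topspace[of A] unfolding Omega_top_def by (simp add: Int_absorb1)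

lemma continuous_map_Omega_top_discrete:
  assumes "finite J" "J \<subseteq> Omega_idx ar U A" "\<And>x. x \<in> Omega ar U A \<Longrightarrow> F x \<in> Y"
    "\<And>x y. x \<in> Omega ar U A \<Longrightarrow> y \<in> Omega ar U A \<Longrightarrow> (\<forall>j\<in>J. x j = y j) \<Longrightarrow> F x = F y"
  shows "continuous_map (Omega_top ar U A) (discrete_topology Y) F"
  unfolding Omega_top_def
proof (rule continuous_map_finite_dependence[OF assms(1,2)])
  have T: "topspace (subtopology (idx_product_top A) (Omega ar U A)) = Omega ar U A"
    using topspace_Omega_top unfolding Omega_top_def .
  show "F \<in> topspace (subtopology (idx_product_top A) (Omega ar U A)) \<rightarrow> Y"
    unfolding T using assms(3) by blast
  show "F x = F y" if "x \<in> topspace (subtopology (idx_product_top A) (Omega ar U A))"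
    "y \<in> topspace (subtopology (idx_product_top A) (Omega ar U A))" "\<forall>j\<in>J. x j = y j" for x y
    using that assms(4) unfolding T by blast
qed

lemma continuous_map_Omega_apply:
  "k \<in> Omega_idx ar U A \<Longrightarrow> continuous_map (Omega_top ar U A) (discrete_topology (ua_carrier (fst k))) (\<lambda>x. x k)"
  by (rule continuous_map_Omega_top_discrete[of "{k}"]) (auto simp: Omega_apply_in)

lemma continuous_map_into_Omega_top:
  assumes "\<And>x. x \<in> topspace X \<Longrightarrow> g x \<in> Omega ar U A"
    "\<And>k. k \<in> Omega_idx ar U A \<Longrightarrow> continuous_map X (discrete_topology (ua_carrier (fst k))) (\<lambda>x. g x k)"
  shows "continuous_map X (Omega_top ar U A) g"
  unfolding Omega_top_def continuous_map_in_subtopology continuous_map_componentwise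
  using assms Omega_PiE by (force simp: PiE_def)

lemma closedin_coordinate_compat:
  assumes kl: "k \<in> Omega_idx ar U A" "l \<in> Omega_idx ar U A"
  shows "closedin (idx_product_top A) {x \<in> topspace (idx_product_top A). h (x k) = x l}"
proof -
  have "continuous_map (idx_product_top A) (discrete_topology (ua_carrier (fst k) \<times> ua_carrier (fst l)))
      (\<lambda>x. (x k, x l))"
    unfolding prod_topology_discrete_topology
    by (intro continuous_map_pairedI continuous_map_product_projection kl)
  then have "closedin (idx_product_top A)
      {x \<in> topspace (idx_product_top A). (x k, x l) \<in> {(p, q). h p = q} \<inter> ua_carrier (fst k) \<times> ua_carrier (fst l)}"
    by (intro closedin_continuous_map_preimage) auto
  moreover have "{x \<in> topspace (idx_product_top A). h (x k) = x l} = {x \<in> topspace (idx_product_top A).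
      (x k, x l) \<in> {(p, q). h p = q} \<inter> ua_carrier (fst k) \<times> ua_carrier (fst l)}"
    using kl by (auto simp: PiE_iff)
  ultimately show ?thesis by simp
qed

lemma closedin_Omega: "closedin (idx_product_top A) (Omega ar U A)"
proof -
  define Z where "Z k l h = {x \<in> topspace (idx_product_top A). h (x k) = x l}" for k l h
  have Omega_eq: "Omega ar U A = topspace (idx_product_top A) \<inter>
      \<Inter>{Z k l h |k l h. k \<in> Omega_idx ar U A \<and> l \<in> Omega_idx ar U A \<and>
        ua_hom ar (fst k) (fst l) h \<and> (\<forall>a\<in>A. h (snd k a) = snd l a)}"
  proof (intro equalityI subsetI)
    fix x assume x: "x \<in> Omega ar U A"
    then show "x \<in> topspace (idx_product_top A) \<inter> \<Inter>{Z k l h |k l h. k \<in> Omega_idx ar U A \<and>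
        l \<in> Omega_idx ar U A \<and> ua_hom ar (fst k) (fst l) h \<and> (\<forall>a\<in>A. h (snd k a) = snd l a)}"
      using Omega_subset_topspace Omega_compat[OF x] unfolding Z_def by blast
  next
    fix x assume x: "x \<in> topspace (idx_product_top A) \<inter> \<Inter>{Z k l h |k l h. k \<in> Omega_idx ar U A \<and>
        l \<in> Omega_idx ar U A \<and> ua_hom ar (fst k) (fst l) h \<and> (\<forall>a\<in>A. h (snd k a) = snd l a)}"
    show "x \<in> Omega ar U A"
    proof (rule OmegaI)
      show "x \<in> PiE (Omega_idx ar U A) (\<lambda>k. ua_carrier (fst k))" using x by simp
      fix k l h assume "k \<in> Omega_idx ar U A" "l \<in> Omega_idx ar U A"
        "ua_hom ar (fst k) (fst l) h" "\<forall>a\<in>A. h (snd k a) = snd l a"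
      then have "x \<in> Z k l h" using x by blast
      then show "h (x k) = x l" unfolding Z_def by simp
    qed
  qed
  have closedZ: "closedin (idx_product_top A) (Z k l h)"
    if "k \<in> Omega_idx ar U A" "l \<in> Omega_idx ar U A" for k l h
    unfolding Z_def using closedin_coordinate_compat that .
  show ?thesis
    unfolding Omega_eq Inter_insert[symmetric]
    by (rule closedin_Inter) (use closedZ closedin_topspace in blast)+
qed

lemma compact_space_Omega_top: "compact_space (Omega_top ar U A)"
proof -
  have "compact_space (idx_product_top A)"
    unfolding compact_space_product_topology
    using member_finite Omega_idx_D(1) compact_space_discrete_topology by blast
  then show ?thesis unfolding Omega_top_def
    using closedin_compact_space closedin_Omega compact_space_subtopology by blast
qed

lemma Hausdorff_space_Omega_top: "Hausdorff_space (Omega_top ar U A)"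
  unfolding Omega_top_def
  by (intro Hausdorff_space_subtopology) (simp add: Hausdorff_space_product_topology)

abbreviation Omega_sq_top :: "'v set \<Rightarrow> _" where
  "Omega_sq_top A \<equiv> prod_topology (Omega_top ar U A) (Omega_top ar U A)"

lemma openin_coordinates_differ:
  assumes k: "k \<in> Omega_idx ar U A"
  shows "openin (Omega_sq_top A) {z \<in> topspace (Omega_sq_top A). fst z k \<noteq> snd z k}"
proof -
  have "continuous_map (Omega_sq_top A) (discrete_topology (ua_carrier (fst k) \<times> ua_carrier (fst k)))
      (\<lambda>z. (fst z k, snd z k))"
    unfolding prod_topology_discrete_topology using continuous_map_Omega_apply[OF k]
    by (intro continuous_map_pairedI continuous_map_compose[OF continuous_map_fst, unfolded o_def]
        continuous_map_compose[OF continuous_map_snd, unfolded o_def])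
  then have "openin (Omega_sq_top A) {z \<in> topspace (Omega_sq_top A).
      (fst z k, snd z k) \<in> {p \<in> ua_carrier (fst k) \<times> ua_carrier (fst k). fst p \<noteq> snd p}}"
    by (intro openin_continuous_map_preimage) auto
  moreover have "{z \<in> topspace (Omega_sq_top A). fst z k \<noteq> snd z k} = {z \<in> topspace (Omega_sq_top A).
      (fst z k, snd z k) \<in> {p \<in> ua_carrier (fst k) \<times> ua_carrier (fst k). fst p \<noteq> snd p}}"
    using Omega_apply_in[OF _ k] by auto
  ultimately show ?thesis by simp
qed

lemma cont_hom_Omega_lift:
  assumes \<tau>: "\<forall>b\<in>B. \<tau> b \<in> Omega ar U A"
  shows "cont_hom_Omega ar U B A (Omega_lift \<tau> B A)"
  unfolding cont_hom_Omega_def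
proof
  show "ua_hom ar (Omega_alg ar U B) (Omega_alg ar U A) (Omega_lift \<tau> B A)"
    using Omega_lift_hom[OF \<tau>] .
  show "continuous_map (Omega_top ar U B) (Omega_top ar U A) (Omega_lift \<tau> B A)"
  proof (rule continuous_map_into_Omega_top)
    show "Omega_lift \<tau> B A x \<in> Omega ar U A" if "x \<in> topspace (Omega_top ar U B)" for x
      using Omega_lift_in[OF \<tau>] that by simp
    fix k assume k: "k \<in> Omega_idx ar U A"
    show "continuous_map (Omega_top ar U B) (discrete_topology (ua_carrier (fst k)))
        (\<lambda>x. Omega_lift \<tau> B A x k)"
    proof (rule continuous_map_Omega_top_discrete[of "{lift_idx \<tau> B k}"])
      show "{lift_idx \<tau> B k} \<subseteq> Omega_idx ar U B" using lift_idx_in[OF \<tau> k] by simp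
      show "Omega_lift \<tau> B A x k \<in> ua_carrier (fst k)" if "x \<in> Omega ar U B" for x
        using Omega_lift_in[OF \<tau> that] Omega_apply_in k by blast
      show "Omega_lift \<tau> B A x k = Omega_lift \<tau> B A y k" if "\<forall>j\<in>{lift_idx \<tau> B k}. x j = y j" for x y
        using that k by (simp add: Omega_lift_def)
    qed simp
  qed
qed

lemma continuous_map_unary_polynomial:
  assumes "wf_trm ar t" "\<forall>i. \<sigma> i \<in> Omega ar U A"
  shows "continuous_map (Omega_top ar U A) (Omega_top ar U A) (\<lambda>x. eval_trm (Omega_op ar U A) (\<sigma>(0 := x)) t)"
proof (rule continuous_map_into_Omega_top)
  show "eval_trm (Omega_op ar U A) (\<sigma>(0 := x)) t \<in> Omega ar U A" if "x \<in> topspace (Omega_top ar U A)" for x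
    using that assms by (intro eval_trm_Omega_in) auto
  fix k assume k: "k \<in> Omega_idx ar U A"
  show "continuous_map (Omega_top ar U A) (discrete_topology (ua_carrier (fst k)))
      (\<lambda>x. eval_trm (Omega_op ar U A) (\<sigma>(0 := x)) t k)"
  proof (rule continuous_map_Omega_top_discrete[of "{k}"])
    show "eval_trm (Omega_op ar U A) (\<sigma>(0 := x)) t k \<in> ua_carrier (fst k)" if "x \<in> Omega ar U A" for x
    proof -
      have "\<forall>i\<in>trm_vars t. (\<sigma>(0 := x)) i \<in> Omega ar U A" using assms(2) that by simp
      then show ?thesis using eval_trm_Omega_in[OF assms(1)] Omega_apply_in[OF _ k] by blast
    qed
    show "eval_trm (Omega_op ar U A) (\<sigma>(0 := x)) t k = eval_trm (Omega_op ar U A) (\<sigma>(0 := y)) t k"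
      if "\<forall>j\<in>{k}. x j = y j" for x y
      using that unfolding eval_trm_Omega_apply[OF k] by (intro eval_trm_cong) auto
  qed (use k in auto)
qed

lemma terms_dense:
  assumes x: "x \<in> Omega ar U A" and N: "openin (Omega_top ar U A) N" "x \<in> N"
  shows "\<exists>t\<in>wf_terms ar A. Omega_trm ar U A t \<in> N"
proof -
  obtain N' where N': "openin (idx_product_top A) N'" "N = N' \<inter> Omega ar U A"
    using N(1) unfolding Omega_top_def openin_subtopology by blast
  then obtain W where W: "finite {k \<in> Omega_idx ar U A. W k \<noteq> ua_carrier (fst k)}"
    "\<forall>k\<in>Omega_idx ar U A. W k \<subseteq> ua_carrier (fst k)"
    "x \<in> PiE (Omega_idx ar U A) W" "PiE (Omega_idx ar U A) W \<subseteq> N'"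
    using N(2) unfolding openin_product_topology_alt by auto
  define K where "K = {k \<in> Omega_idx ar U A. W k \<noteq> ua_carrier (fst k)}"
  obtain t where t: "t \<in> wf_terms ar A" "\<And>k. k \<in> K \<Longrightarrow> Omega_trm ar U A t k = x k"
    using Omega_approx_by_term[of K A x] W(1) x unfolding K_def by blast
  have om: "Omega_trm ar U A t \<in> Omega ar U A" using Omega_trm_in[OF t(1)] .
  have "Omega_trm ar U A t \<in> PiE (Omega_idx ar U A) W"
  proof (rule PiE_I)
    fix k assume k: "k \<in> Omega_idx ar U A"
    show "Omega_trm ar U A t k \<in> W k"
    proof (cases "k \<in> K")
      case True then show ?thesis using t(2) W(3) k by (auto simp: PiE_iff)
    next
      case False then show ?thesis using Omega_apply_in[OF om k] k unfolding K_def by simp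
    qed
  qed (rule PiE_arb[OF Omega_PiE[OF om]])
  then show ?thesis using W(4) N'(2) om t(1) by blast
qed

end

section \<open>Provability\<close>

text \<open>Composition of unary polynomials (terms with all variables but \<open>0\<close> fixed): the odd
variables of the composite carry the parameters of the outer polynomial, the even ones those of
the inner.\<close>

definition comp_trm :: "('f, nat) trm \<Rightarrow> ('f, nat) trm \<Rightarrow> ('f, nat) trm" where
  "comp_trm t t' = subst (\<lambda>i. if i = 0 then subst (\<lambda>j. Var (2 * j)) t' else Var (2 * i + 1)) t"

definition comp_asg :: "(nat \<Rightarrow> 'a) \<Rightarrow> (nat \<Rightarrow> 'a) \<Rightarrow> nat \<Rightarrow> 'a" where
  "comp_asg \<sigma> \<sigma>' n = (if even n then \<sigma>' (n div 2) else \<sigma> (n div 2))"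

lemma wf_comp_trm: "wf_trm ar t \<Longrightarrow> wf_trm ar t' \<Longrightarrow> wf_trm ar (comp_trm t t')"
  unfolding comp_trm_def by (intro wf_subst) (auto simp: wf_subst)

lemma range_comp_asg: "range (comp_asg \<sigma> \<sigma>') \<subseteq> range \<sigma> \<union> range \<sigma>'"
  unfolding comp_asg_def by auto

lemma eval_comp_trm:
  "eval_trm F ((comp_asg \<sigma> \<sigma>')(0 := w)) (comp_trm t t') = eval_trm F (\<sigma>(0 := eval_trm F (\<sigma>'(0 := w)) t')) t"
proof -
  have "(\<lambda>j. ((comp_asg \<sigma> \<sigma>')(0 := w)) (2 * j)) = \<sigma>'(0 := w)"
    by (auto simp: comp_asg_def)
  then show ?thesis
    unfolding comp_trm_def eval_subst
    by (intro eval_trm_cong) (auto simp: eval_subst comp_asg_def)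
qed

locale provability = pseudovar ar U for ar :: "'f \<Rightarrow> nat" and U +
  fixes \<Sigma> :: "(('f, 'v) trm \<times> ('f, 'v) trm) set"
  assumes wf_\<Sigma>: "\<forall>e\<in>\<Sigma>. wf_trm ar (fst e) \<and> wf_trm ar (snd e)"
begin

lemma Omega_trm_id_vars:
  "e \<in> \<Sigma> \<Longrightarrow> Omega_trm ar U (id_vars e) (fst e) \<in> Omega ar U (id_vars e) \<and>
     Omega_trm ar U (id_vars e) (snd e) \<in> Omega ar U (id_vars e)"
  using wf_\<Sigma> by (auto intro!: Omega_trm_in simp: wf_terms_def id_vars_def)

lemma Sigma0_subset: "Sigma0 ar U \<Sigma> A \<subseteq> Omega ar U A \<times> Omega ar U A"
proof
  fix z assume "z \<in> Sigma0 ar U \<Sigma> A"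
  then obtain e p q g t \<sigma> where z: "z = (eval_trm (Omega_op ar U A) (\<sigma>(0 := g p)) t,
      eval_trm (Omega_op ar U A) (\<sigma>(0 := g q)) t)"
    and e: "e \<in> \<Sigma>" and pq: "p \<in> Omega ar U (id_vars e)" "q \<in> Omega ar U (id_vars e)"
    and g: "cont_hom_Omega ar U (id_vars e) A g" and t: "wf_trm ar (t :: ('f, nat) trm)"
    and \<sigma>: "\<forall>i. \<sigma> i \<in> Omega ar U A"
    unfolding Sigma0_def using Omega_trm_id_vars by blast
  then have "g p \<in> Omega ar U A" "g q \<in> Omega ar U A"
    using g unfolding cont_hom_Omega_def ua_hom_def by auto
  then show "z \<in> Omega ar U A \<times> Omega ar U A"
    unfolding z using \<sigma> by (auto intro!: eval_trm_Omega_in[OF t])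
qed

lemma Sigma0_sym: "(x, y) \<in> Sigma0 ar U \<Sigma> A \<Longrightarrow> (y, x) \<in> Sigma0 ar U \<Sigma> A"
  unfolding Sigma0_def by blast

lemma Sigma0_unary_polynomial:
  assumes xy: "(x, y) \<in> Sigma0 ar U \<Sigma> A" and t: "wf_trm ar (t :: ('f, nat) trm)"
    and \<sigma>: "\<forall>i. \<sigma> i \<in> Omega ar U A"
  shows "(eval_trm (Omega_op ar U A) (\<sigma>(0 := x)) t, eval_trm (Omega_op ar U A) (\<sigma>(0 := y)) t)
    \<in> Sigma0 ar U \<Sigma> A"
proof -
  from xy obtain e p q g t' \<sigma>' where
    xy_eq: "x = eval_trm (Omega_op ar U A) (\<sigma>'(0 := g p)) t'" "y = eval_trm (Omega_op ar U A) (\<sigma>'(0 := g q)) t'"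
    and e: "e \<in> \<Sigma>" and pq: "(p = Omega_trm ar U (id_vars e) (fst e) \<and> q = Omega_trm ar U (id_vars e) (snd e)) \<or>
      (p = Omega_trm ar U (id_vars e) (snd e) \<and> q = Omega_trm ar U (id_vars e) (fst e))"
    and g: "cont_hom_Omega ar U (id_vars e) A g" and t': "wf_trm ar (t' :: ('f, nat) trm)"
    and \<sigma>': "\<forall>i. \<sigma>' i \<in> Omega ar U A"
    unfolding Sigma0_def by blast
  define t'' where "t'' = comp_trm t t'"
  define \<sigma>'' where "\<sigma>'' = comp_asg \<sigma> \<sigma>'"
  have t'': "wf_trm ar t''" unfolding t''_def using wf_comp_trm[OF t t'] .
  have \<sigma>'': "range \<sigma>'' \<subseteq> range \<sigma> \<union> range \<sigma>'" unfolding \<sigma>''_def by (rule range_comp_asg)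
  have comp: "eval_trm (Omega_op ar U A) (\<sigma>''(0 := w)) t''
      = eval_trm (Omega_op ar U A) (\<sigma>(0 := eval_trm (Omega_op ar U A) (\<sigma>'(0 := w)) t')) t" for w
    unfolding t''_def \<sigma>''_def by (rule eval_comp_trm)
  have "\<sigma>'' i \<in> Omega ar U A" for i using subsetD[OF \<sigma>'' rangeI[of \<sigma>'' i]] \<sigma> \<sigma>' by auto
  then have "(eval_trm (Omega_op ar U A) (\<sigma>''(0 := g p)) t'', eval_trm (Omega_op ar U A) (\<sigma>''(0 := g q)) t'')
      \<in> Sigma0 ar U \<Sigma> A"
    unfolding Sigma0_def using e pq g t'' by blast
  then show ?thesis unfolding comp xy_eq .
qed

lemma Sigma0_instance:
  assumes "e \<in> \<Sigma>" "cont_hom_Omega ar U (id_vars e) A g"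
  shows "(g (Omega_trm ar U (id_vars e) (fst e)), g (Omega_trm ar U (id_vars e) (snd e))) \<in> Sigma0 ar U \<Sigma> A"
proof -
  let ?p = "g (Omega_trm ar U (id_vars e) (fst e))" and ?q = "g (Omega_trm ar U (id_vars e) (snd e))"
  have "?p \<in> Omega ar U A"
    using assms(2) Omega_trm_id_vars[OF assms(1)] unfolding cont_hom_Omega_def ua_hom_def by auto
  then have "(eval_trm (Omega_op ar U A) ((\<lambda>_. ?p)(0 := ?p)) (Var 0 :: ('f, nat) trm),
      eval_trm (Omega_op ar U A) ((\<lambda>_. ?p)(0 := ?q)) (Var 0 :: ('f, nat) trm)) \<in> Sigma0 ar U \<Sigma> A"
    unfolding Sigma0_def using assms
    by (intro CollectI exI[of _ e] exI[of _ "Omega_trm ar U (id_vars e) (fst e)"]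
        exI[of _ "Omega_trm ar U (id_vars e) (snd e)"] exI[of _ g] exI[of _ "Var 0"] exI[of _ "\<lambda>_. ?p"]) auto
  then show ?thesis by simp
qed

lemma Sigma_tilde_least:
  "Sigma0 ar U \<Sigma> A \<subseteq> R \<Longrightarrow> trans R \<Longrightarrow> closedin (Omega_sq_top A) R \<Longrightarrow> Sigma_tilde ar U \<Sigma> A \<subseteq> R"
  unfolding Sigma_tilde_def by blast

lemma Sigma0_subset_Sigma_tilde: "Sigma0 ar U \<Sigma> A \<subseteq> Sigma_tilde ar U \<Sigma> A"
  and trans_Sigma_tilde: "trans (Sigma_tilde ar U \<Sigma> A)"
  unfolding Sigma_tilde_def trans_def by blast+

lemma closedin_Omega_sq: "closedin (Omega_sq_top A) (Omega ar U A \<times> Omega ar U A)"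
  using closedin_topspace[of "Omega_sq_top A"] by simp

lemma Sigma_tilde_subset: "Sigma_tilde ar U \<Sigma> A \<subseteq> Omega ar U A \<times> Omega ar U A"
  by (rule Sigma_tilde_least[OF Sigma0_subset _ closedin_Omega_sq]) (auto simp: trans_def)

lemma closedin_Sigma_tilde: "closedin (Omega_sq_top A) (Sigma_tilde ar U \<Sigma> A)"
  unfolding Sigma_tilde_def
  by (rule closedin_Inter) (use Sigma0_subset closedin_Omega_sq in \<open>auto simp: trans_def\<close>)

lemma Sigma_tilde_sym:
  assumes "(x, y) \<in> Sigma_tilde ar U \<Sigma> A"
  shows "(y, x) \<in> Sigma_tilde ar U \<Sigma> A"
proof -
  let ?S = "Sigma_tilde ar U \<Sigma> A"
  have "continuous_map (Omega_sq_top A) (Omega_sq_top A) (\<lambda>z. (snd z, fst z))"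
    by (intro continuous_map_pairedI continuous_map_fst continuous_map_snd)
  then have "closedin (Omega_sq_top A) {z \<in> topspace (Omega_sq_top A). (snd z, fst z) \<in> ?S}"
    using closedin_continuous_map_preimage closedin_Sigma_tilde by blast
  moreover have "{z \<in> topspace (Omega_sq_top A). (snd z, fst z) \<in> ?S} = converse ?S"
    using Sigma_tilde_subset by auto
  moreover have "Sigma0 ar U \<Sigma> A \<subseteq> converse (Sigma0 ar U \<Sigma> A)" using Sigma0_sym by auto
  then have "Sigma0 ar U \<Sigma> A \<subseteq> converse ?S" using Sigma0_subset_Sigma_tilde by blast
  ultimately have "?S \<subseteq> converse ?S"
    using trans_Sigma_tilde by (intro Sigma_tilde_least) auto
  then show ?thesis using assms by blast
qed

lemma Sigma_tilde_unary_polynomial: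
  assumes t: "wf_trm ar (t :: ('f, nat) trm)" and \<sigma>: "\<forall>i. \<sigma> i \<in> Omega ar U A"
    and xy: "(x, y) \<in> Sigma_tilde ar U \<Sigma> A"
  shows "(eval_trm (Omega_op ar U A) (\<sigma>(0 := x)) t, eval_trm (Omega_op ar U A) (\<sigma>(0 := y)) t)
    \<in> Sigma_tilde ar U \<Sigma> A"
proof -
  let ?S = "Sigma_tilde ar U \<Sigma> A"
  define p where "p x = eval_trm (Omega_op ar U A) (\<sigma>(0 := x)) t" for x
  define R where "R = {z \<in> topspace (Omega_sq_top A). (p (fst z), p (snd z)) \<in> ?S}"
  have "continuous_map (Omega_top ar U A) (Omega_top ar U A) p"
    unfolding p_def using continuous_map_unary_polynomial[OF t \<sigma>] by simp
  then have "continuous_map (Omega_sq_top A) (Omega_sq_top A) (\<lambda>z. (p (fst z), p (snd z)))"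
    using continuous_map_compose[OF continuous_map_fst] continuous_map_compose[OF continuous_map_snd]
    by (intro continuous_map_pairedI) (auto simp: o_def)
  then have closed: "closedin (Omega_sq_top A) R"
    unfolding R_def using closedin_continuous_map_preimage closedin_Sigma_tilde by blast
  have sub: "Sigma0 ar U \<Sigma> A \<subseteq> R"
  proof
    fix z assume z: "z \<in> Sigma0 ar U \<Sigma> A"
    then have "(p (fst z), p (snd z)) \<in> ?S"
      using Sigma0_unary_polynomial[OF _ t \<sigma>] Sigma0_subset_Sigma_tilde unfolding p_def by force
    then show "z \<in> R" using z Sigma0_subset unfolding R_def by auto
  qed
  have "trans R"
    using trans_Sigma_tilde[of A] unfolding R_def trans_def by auto
  then have "?S \<subseteq> R" by (rule Sigma_tilde_least[OF sub _ closed])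
  then have "(x, y) \<in> R" using xy by blast
  then show ?thesis unfolding R_def p_def by simp
qed

lemma provable_refl: "provable ar U \<Sigma> A x x"
  by (simp add: provable_def)

lemma provable_sym: "provable ar U \<Sigma> A x y \<Longrightarrow> provable ar U \<Sigma> A y x"
  unfolding provable_def using Sigma_tilde_sym by auto

lemma provable_trans:
  "provable ar U \<Sigma> A x y \<Longrightarrow> provable ar U \<Sigma> A y z \<Longrightarrow> provable ar U \<Sigma> A x z"
  unfolding provable_def using trans_Sigma_tilde[of A] by (auto dest: transD)

lemma provable_in_Omega: "provable ar U \<Sigma> A x y \<Longrightarrow> x \<in> Omega ar U A \<Longrightarrow> y \<in> Omega ar U A"
  unfolding provable_def using Sigma_tilde_subset by auto

lemma provable_unary_polynomial:
  assumes "wf_trm ar (t :: ('f, nat) trm)" "\<forall>i. \<sigma> i \<in> Omega ar U A" "provable ar U \<Sigma> A x y"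
  shows "provable ar U \<Sigma> A (eval_trm (Omega_op ar U A) (\<sigma>(0 := x)) t) (eval_trm (Omega_op ar U A) (\<sigma>(0 := y)) t)"
  using assms(3) Sigma_tilde_unary_polynomial[OF assms(1,2)] unfolding provable_def by auto

lemma provable_Omega_op_arg:
  assumes "set pre \<subseteq> Omega ar U A" "set post \<subseteq> Omega ar U A" "x \<in> Omega ar U A"
    "length pre + Suc (length post) = ar f" "provable ar U \<Sigma> A x y"
  shows "provable ar U \<Sigma> A (Omega_op ar U A f (pre @ x # post)) (Omega_op ar U A f (pre @ y # post))"
proof -
  define L where "L = pre @ x # post"
  define t :: "('f, nat) trm"
    where "t = App f (map (\<lambda>i. if i = length pre then Var 0 else Var (Suc i)) [0..<length L])"
  define \<sigma> where "\<sigma> i = (if 0 < i \<and> i \<le> length L then L ! (i - 1) else x)" for i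
  have "\<forall>i. \<sigma> i \<in> Omega ar U A"
    using assms(1-3) unfolding \<sigma>_def L_def by (auto simp: nth_append nth_Cons' split: if_splits)
  moreover have "wf_trm ar t" unfolding t_def L_def using assms(4) by (simp add: list_all_iff)
  moreover have "eval_trm (Omega_op ar U A) (\<sigma>(0 := z)) t = Omega_op ar U A f (pre @ z # post)" for z
  proof -
    have "map (eval_trm (Omega_op ar U A) (\<sigma>(0 := z)))
        (map (\<lambda>i. if i = length pre then Var 0 else Var (Suc i)) [0..<length L]) = L[length pre := z]"
    proof (rule nth_equalityI)
      fix i assume "i < length (map (eval_trm (Omega_op ar U A) (\<sigma>(0 := z)))
          (map (\<lambda>i. if i = length pre then Var 0 else Var (Suc i)) [0..<length L]))"
      then have "i < length L" by simp
      then show "map (eval_trm (Omega_op ar U A) (\<sigma>(0 := z)))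
          (map (\<lambda>i. if i = length pre then Var 0 else Var (Suc i)) [0..<length L]) ! i = L[length pre := z] ! i"
        by (simp add: nth_list_update \<sigma>_def)
    qed simp
    also have "L[length pre := z] = pre @ z # post" by (simp add: L_def list_update_append)
    finally show ?thesis unfolding t_def by simp
  qed
  ultimately show ?thesis using provable_unary_polynomial assms(5) by metis
qed

lemma provable_Omega_op:
  assumes "list_all2 (provable ar U \<Sigma> A) xs ys" "set xs \<subseteq> Omega ar U A" "length xs = ar f"
  shows "provable ar U \<Sigma> A (Omega_op ar U A f xs) (Omega_op ar U A f ys)"
proof -
  have "provable ar U \<Sigma> A (Omega_op ar U A f (pre @ xs)) (Omega_op ar U A f (pre @ ys))"
    if "set pre \<subseteq> Omega ar U A" "length pre + length xs = ar f" for pre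
    using assms(1,2) that
  proof (induction arbitrary: pre rule: list_all2_induct)
    case (Cons x xs y ys)
    have y: "y \<in> Omega ar U A" using provable_in_Omega[OF Cons.hyps(1)] Cons.prems(1) by simp
    have "provable ar U \<Sigma> A (Omega_op ar U A f (pre @ x # xs)) (Omega_op ar U A f (pre @ y # xs))"
      using Cons by (intro provable_Omega_op_arg) auto
    moreover have "provable ar U \<Sigma> A (Omega_op ar U A f ((pre @ [y]) @ xs)) (Omega_op ar U A f ((pre @ [y]) @ ys))"
      using Cons y by (intro Cons.IH) auto
    ultimately show ?case by (auto intro: provable_trans)
  qed (simp add: provable_refl)
  from this[of "[]"] show ?thesis using assms(3) by simp
qed

end

section \<open>The term model\<close>

locale term_model_setting = provability ar U \<Sigma>
  for ar :: "'f::countable \<Rightarrow> nat" and U and \<Sigma> :: "(('f, 'v) trm \<times> ('f, 'v) trm) set" +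
  fixes A :: "nat set"
  assumes finite_A: "finite A" and locally_finite: "locally_finite_variety ar \<Sigma>"
begin

abbreviation "terms \<equiv> wf_terms ar A"
abbreviation "om \<equiv> Omega_trm ar U A"
abbreviation "prov \<equiv> provable ar U \<Sigma> A"

text \<open>The term model is the image of the term algebra in \<open>\<Omega>\<^sub>A U\<close> modulo provability; the
class of a term is represented by the least code \<open>to_nat s\<close> of a term \<open>s\<close> in it.\<close>

definition code :: "('f, nat) trm \<Rightarrow> nat" where
  "code t = (LEAST n. \<exists>s\<in>terms. n = to_nat s \<and> prov (om s) (om t))"

definition term_model :: "('f, nat) alg" where
  "term_model = (code ` terms, \<lambda>f ns. code (App f (map from_nat ns)))"

lemma term_model_simps:
  "ua_carrier term_model = code ` terms" "ua_ops term_model f ns = code (App f (map from_nat ns))"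
  unfolding term_model_def ua_carrier_def ua_ops_def by auto

lemma code_rep:
  assumes "t \<in> terms"
  shows "from_nat (code t) \<in> terms" "prov (om (from_nat (code t))) (om t)"
proof -
  have "\<exists>n. \<exists>s\<in>terms. n = to_nat s \<and> prov (om s) (om t)" using assms provable_refl by blast
  from LeastI_ex[OF this] show "from_nat (code t) \<in> terms" "prov (om (from_nat (code t))) (om t)"
    unfolding code_def by auto
qed

lemma code_eq_iff:
  assumes "s \<in> terms" "t \<in> terms"
  shows "code s = code t \<longleftrightarrow> prov (om s) (om t)"
proof
  assume "code s = code t"
  then show "prov (om s) (om t)"
    using code_rep[OF assms(1)] code_rep[OF assms(2)] provable_sym provable_trans by metis
next
  assume "prov (om s) (om t)"
  then have "prov (om r) (om s) \<longleftrightarrow> prov (om r) (om t)" for r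
    using provable_sym provable_trans by blast
  then show "code s = code t" unfolding code_def by simp
qed

lemma code_from_nat:
  assumes "n \<in> ua_carrier term_model"
  shows "code (from_nat n) = n" "from_nat n \<in> terms"
proof -
  obtain s where s: "s \<in> terms" "n = code s" using assms unfolding term_model_simps by blast
  then show "from_nat n \<in> terms" using code_rep(1) by blast
  then show "code (from_nat n) = n"
    using code_eq_iff code_rep s by blast
qed

lemma term_model_ops_code:
  assumes ts: "set ts \<subseteq> terms" "length ts = ar f"
  shows "ua_ops term_model f (map code ts) = code (App f ts)"
proof -
  let ?ts' = "map (\<lambda>t. from_nat (code t)) ts"
  have ts': "set ?ts' \<subseteq> terms" using ts(1) code_rep(1) by auto
  have "list_all2 prov (map om ?ts') (map om ts)"
    using ts(1) code_rep(2) by (induction ts) auto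
  then have "prov (Omega_op ar U A f (map om ?ts')) (Omega_op ar U A f (map om ts))"
    by (rule provable_Omega_op) (use ts' Omega_trm_in ts(2) in auto)
  then have "code (App f ?ts') = code (App f ts)"
    using code_eq_iff[OF App_in_wf_terms App_in_wf_terms] ts ts' by (simp add: Omega_trm_App)
  then show ?thesis unfolding term_model_simps by (simp add: o_def)
qed

lemma term_model_is_alg: "is_alg ar term_model"
  unfolding is_alg_def
proof (intro allI impI)
  fix f ns assume ns: "set ns \<subseteq> ua_carrier term_model \<and> length ns = ar f"
  then have "set (map from_nat ns) \<subseteq> terms" using code_from_nat(2) by auto
  then have "App f (map from_nat ns) \<in> terms" using ns by (intro App_in_wf_terms) auto
  then show "ua_ops term_model f ns \<in> ua_carrier term_model" unfolding term_model_simps by blast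
qed

lemma eval_term_model:
  assumes "wf_trm ar t" "\<forall>x. \<sigma> x \<in> ua_carrier term_model"
  shows "eval_trm (ua_ops term_model) \<sigma> t = code (subst (\<lambda>x. from_nat (\<sigma> x)) t)"
  using assms(1)
proof (induction t)
  case (Var x) then show ?case using code_from_nat(1) assms(2) by simp
next
  case (App f ts)
  have "subst (\<lambda>x. from_nat (\<sigma> x)) t \<in> terms" if "t \<in> set ts" for t
    using App.prems that code_from_nat(2) assms(2)
    by (intro subst_in_wf_terms[of _ _ UNIV]) (auto simp: wf_terms_def list_all_iff)
  then have "ua_ops term_model f (map code (map (subst (\<lambda>x. from_nat (\<sigma> x))) ts))
      = code (App f (map (subst (\<lambda>x. from_nat (\<sigma> x))) ts))"
    using App.prems by (intro term_model_ops_code) auto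
  moreover have "map (eval_trm (ua_ops term_model) \<sigma>) ts = map code (map (subst (\<lambda>x. from_nat (\<sigma> x))) ts)"
    using App by (auto simp: list_all_iff)
  ultimately show ?case by (simp only: eval_trm.simps subst.simps)
qed

lemma term_model_sat:
  assumes e: "e \<in> \<Sigma>" and \<sigma>: "\<forall>x. \<sigma> x \<in> ua_carrier term_model"
  shows "eval_trm (ua_ops term_model) \<sigma> (fst e) = eval_trm (ua_ops term_model) \<sigma> (snd e)"
proof -
  define \<tau> where "\<tau> x = (from_nat (\<sigma> x) :: ('f, nat) trm)" for x
  have \<tau>: "\<tau> x \<in> terms" for x unfolding \<tau>_def using code_from_nat(2) \<sigma> by blast
  have om\<tau>: "\<forall>b\<in>id_vars e. om (\<tau> b) \<in> Omega ar U A" using \<tau> Omega_trm_in by blast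
  have lift: "Omega_lift (\<lambda>b. om (\<tau> b)) (id_vars e) A (Omega_trm ar U (id_vars e) t) = om (subst \<tau> t)"
    if "t \<in> wf_terms ar (id_vars e)" for t
    using Omega_lift_Omega_trm[OF om\<tau> that] by (simp add: Omega_trm_def eval_subst)
  have e_terms: "fst e \<in> wf_terms ar (id_vars e)" "snd e \<in> wf_terms ar (id_vars e)"
    using wf_\<Sigma> e unfolding wf_terms_def id_vars_def by auto
  have "(om (subst \<tau> (fst e)), om (subst \<tau> (snd e))) \<in> Sigma0 ar U \<Sigma> A"
    using Sigma0_instance[OF e cont_hom_Omega_lift[OF om\<tau>]] unfolding lift[OF e_terms(1)] lift[OF e_terms(2)] .
  then have "prov (om (subst \<tau> (fst e))) (om (subst \<tau> (snd e)))"
    using Sigma0_subset_Sigma_tilde unfolding provable_def by blast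
  then have "code (subst \<tau> (fst e)) = code (subst \<tau> (snd e))"
    using code_eq_iff subst_in_wf_terms e_terms \<tau> by blast
  then show ?thesis
    using eval_term_model[OF _ \<sigma>] e_terms unfolding \<tau>_def wf_terms_def by simp
qed

lemma eval_term_model_code_Var:
  "t \<in> terms \<Longrightarrow> eval_trm (ua_ops term_model) (\<lambda>x. code (Var x)) t = code t"
proof (induction t)
  case (App f ts)
  then have ts: "set ts \<subseteq> terms" "length ts = ar f"
    unfolding wf_terms_def by (auto simp: list_all_iff)
  with App.IH have "map (eval_trm (ua_ops term_model) (\<lambda>x. code (Var x))) ts = map code ts" by auto
  then show ?case using term_model_ops_code[OF ts] by (simp only: eval_trm.simps)
qed simp

lemma code_Var_in_term_model: "(\<lambda>x. code (Var x)) ` A \<subseteq> ua_carrier term_model"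
  unfolding term_model_simps by (intro image_subsetI imageI Var_in_wf_terms)

lemma term_model_generated: "ua_generated ar term_model ((\<lambda>x. code (Var x)) ` A) = ua_carrier term_model"
proof -
  have "eval_trm (ua_ops term_model) (\<lambda>x. code (Var x)) ` terms = code ` terms"
    by (rule image_cong[OF refl eval_term_model_code_Var])
  then show ?thesis
    by (simp add: ua_generated_eq_term_values[OF term_model_is_alg code_Var_in_term_model]
        term_values_def term_model_simps)
qed

lemma finite_term_model: "finite (ua_carrier term_model)"
proof -
  have "\<forall>e\<in>\<Sigma>. sat_identity term_model e"
    unfolding sat_identity_def using term_model_sat by blast
  then show ?thesis
    using locally_finite term_model_is_alg term_model_generated finite_A code_Var_in_term_model
    unfolding locally_finite_variety_def by blast
qed

end

section \<open>Separating the provability classes by a single index\<close>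

context term_model_setting
begin

definition prov_class :: "nat \<Rightarrow> ((('f, nat) alg \<times> (nat \<Rightarrow> nat)) \<Rightarrow> nat) set" where
  "prov_class n = {y \<in> Omega ar U A. prov y (om (from_nat n))}"

lemma closedin_prov_class:
  assumes n: "n \<in> ua_carrier term_model"
  shows "closedin (Omega_top ar U A) (prov_class n)"
proof -
  let ?r = "om (from_nat n)"
  have r: "?r \<in> Omega ar U A" using Omega_trm_in code_from_nat(2)[OF n] by blast
  have "continuous_map (Omega_top ar U A) (Omega_sq_top A) (\<lambda>y. (y, ?r))"
    using r by (intro continuous_map_pairedI) auto
  then have c1: "closedin (Omega_top ar U A) {y \<in> topspace (Omega_top ar U A). (y, ?r) \<in> Sigma_tilde ar U \<Sigma> A}"
    using closedin_continuous_map_preimage closedin_Sigma_tilde by blast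
  have c2: "closedin (Omega_top ar U A) {?r}"
    using r by (intro closedin_Hausdorff_singleton Hausdorff_space_Omega_top) simp
  have eq: "prov_class n = {y \<in> topspace (Omega_top ar U A). (y, ?r) \<in> Sigma_tilde ar U \<Sigma> A} \<union> {?r}"
    unfolding prov_class_def provable_def using r by auto
  show ?thesis unfolding eq by (rule closedin_Un[OF c1 c2])
qed

lemma prov_classes_cover:
  assumes x: "x \<in> Omega ar U A"
  shows "\<exists>n\<in>ua_carrier term_model. x \<in> prov_class n"
proof (rule ccontr)
  assume none: "\<not> ?thesis"
  let ?N = "Omega ar U A - \<Union>(prov_class ` ua_carrier term_model)"
  have "closedin (Omega_top ar U A) (\<Union>(prov_class ` ua_carrier term_model))"
    using finite_term_model closedin_prov_class by (intro closedin_Union) auto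
  then have "openin (Omega_top ar U A) ?N"
    using openin_diff[OF openin_topspace] by fastforce
  then obtain t where t: "t \<in> terms" "om t \<in> ?N"
    using terms_dense[OF x] x none by blast
  have "om t \<in> prov_class (code t)"
    unfolding prov_class_def using Omega_trm_in[OF t(1)] code_rep(2)[OF t(1)] provable_sym by blast
  moreover have "code t \<in> ua_carrier term_model" using t(1) unfolding term_model_simps by blast
  ultimately show False using t(2) by blast
qed

lemma provable_iff_same_class:
  assumes "n \<in> ua_carrier term_model" "m \<in> ua_carrier term_model" "x \<in> prov_class n" "y \<in> prov_class m"
  shows "prov x y \<longleftrightarrow> n = m"
proof -
  have "prov x y \<longleftrightarrow> prov (om (from_nat n)) (om (from_nat m))"
    using assms(3,4) provable_sym provable_trans unfolding prov_class_def by blast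
  also have "\<dots> \<longleftrightarrow> n = m"
    using code_eq_iff[OF code_from_nat(2)[OF assms(1)] code_from_nat(2)[OF assms(2)]]
      code_from_nat(1) assms(1,2) by simp
  finally show ?thesis .
qed

lemma compactin_unprovable:
  "compactin (Omega_sq_top A) {z \<in> Omega ar U A \<times> Omega ar U A. \<not> prov (fst z) (snd z)}"
proof -
  let ?M = "ua_carrier term_model"
  have eq: "{z \<in> Omega ar U A \<times> Omega ar U A. \<not> prov (fst z) (snd z)}
      = (\<Union>(n, m)\<in>{(n, m) \<in> ?M \<times> ?M. n \<noteq> m}. prov_class n \<times> prov_class m)"
  proof (intro equalityI subsetI)
    fix z assume z: "z \<in> {z \<in> Omega ar U A \<times> Omega ar U A. \<not> prov (fst z) (snd z)}"
    obtain x y where xy: "z = (x, y)" by fastforce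
    obtain n where n: "n \<in> ?M" "x \<in> prov_class n" using prov_classes_cover z xy by auto
    obtain m where m: "m \<in> ?M" "y \<in> prov_class m" using prov_classes_cover z xy by auto
    have "n \<noteq> m" using provable_iff_same_class[OF n(1) m(1) n(2) m(2)] z xy by simp
    then show "z \<in> (\<Union>(n, m)\<in>{(n, m) \<in> ?M \<times> ?M. n \<noteq> m}. prov_class n \<times> prov_class m)"
      using n m xy by blast
  next
    fix z assume "z \<in> (\<Union>(n, m)\<in>{(n, m) \<in> ?M \<times> ?M. n \<noteq> m}. prov_class n \<times> prov_class m)"
    then obtain n m x y where nm: "n \<in> ?M" "m \<in> ?M" "n \<noteq> m" "x \<in> prov_class n" "y \<in> prov_class m"
      and xy: "z = (x, y)" by blast
    then have "\<not> prov x y" using provable_iff_same_class[OF nm(1,2,4,5)] by simp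
    moreover have "x \<in> Omega ar U A" "y \<in> Omega ar U A" using nm(4,5) unfolding prov_class_def by auto
    ultimately show "z \<in> {z \<in> Omega ar U A \<times> Omega ar U A. \<not> prov (fst z) (snd z)}"
      using xy by simp
  qed
  have rect: "closedin (Omega_sq_top A) (prov_class n \<times> prov_class m)" if "n \<in> ?M" "m \<in> ?M" for n m
    using closedin_prov_class that by (simp add: closedin_prod_Times_iff)
  have "closedin (Omega_sq_top A) {z \<in> Omega ar U A \<times> Omega ar U A. \<not> prov (fst z) (snd z)}"
  proof -
    have "finite {(n, m) \<in> ?M \<times> ?M. n \<noteq> m}"
      by (rule finite_subset[of _ "?M \<times> ?M"]) (auto simp: finite_term_model)
    then show ?thesis unfolding eq by (intro closedin_Union finite_imageI) (use rect in auto)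
  qed
  moreover have "compact_space (Omega_sq_top A)"
    using compact_space_Omega_top[of A] by (simp add: compact_space_prod_topology)
  ultimately show ?thesis using closedin_compact_space by blast
qed

lemma finite_separating_indices:
  obtains K where "finite K" "K \<subseteq> Omega_idx ar U A"
    "\<And>x y. x \<in> Omega ar U A \<Longrightarrow> y \<in> Omega ar U A \<Longrightarrow> \<not> prov x y \<Longrightarrow> \<exists>k\<in>K. x k \<noteq> y k"
proof -
  define W where "W = {z \<in> Omega ar U A \<times> Omega ar U A. \<not> prov (fst z) (snd z)}"
  define Sep where "Sep k = {z \<in> topspace (Omega_sq_top A). fst z k \<noteq> snd z k}" for k
  have W_cover: "W \<subseteq> \<Union>(Sep ` Omega_idx ar U A)"
  proof
    fix z assume z: "z \<in> W"
    then have z\<Omega>: "fst z \<in> Omega ar U A" "snd z \<in> Omega ar U A" and "\<not> prov (fst z) (snd z)"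
      unfolding W_def by auto
    then have "fst z \<noteq> snd z" using provable_refl[of A "fst z"] by metis
    then obtain k where "k \<in> Omega_idx ar U A" "fst z k \<noteq> snd z k"
      using PiE_ext[OF Omega_PiE[OF z\<Omega>(1)] Omega_PiE[OF z\<Omega>(2)]] by blast
    then show "z \<in> \<Union>(Sep ` Omega_idx ar U A)" using z unfolding W_def Sep_def by auto
  qed
  have "\<exists>F. finite F \<and> F \<subseteq> Sep ` Omega_idx ar U A \<and> W \<subseteq> \<Union>F"
    using compactin_unprovable[unfolded W_def[symmetric] compactin_def, THEN conjunct2,
        THEN spec[of _ "Sep ` Omega_idx ar U A"]] openin_coordinates_differ W_cover
    unfolding Sep_def by blast
  then obtain K where K: "finite K" "K \<subseteq> Omega_idx ar U A" "W \<subseteq> \<Union>(Sep ` K)"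
    by (metis finite_subset_image)
  show ?thesis
  proof (rule that[OF K(1,2)])
    fix x y assume "x \<in> Omega ar U A" "y \<in> Omega ar U A" "\<not> prov x y"
    then have "(x, y) \<in> W" unfolding W_def by simp
    then have "(x, y) \<in> \<Union>(Sep ` K)" by (rule subsetD[OF K(3)])
    then show "\<exists>k\<in>K. x k \<noteq> y k" unfolding Sep_def by auto
  qed
qed

lemma separating_index_exists:
  "\<exists>k0\<in>Omega_idx ar U A. \<forall>x\<in>Omega ar U A. \<forall>y\<in>Omega ar U A. x k0 = y k0 \<longrightarrow> prov x y"
proof -
  obtain K where K: "finite K" "K \<subseteq> Omega_idx ar U A"
    and sep: "\<And>x y. x \<in> Omega ar U A \<Longrightarrow> y \<in> Omega ar U A \<Longrightarrow> \<not> prov x y \<Longrightarrow> \<exists>k\<in>K. x k \<noteq> y k"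
    using finite_separating_indices by blast
  obtain k0 where k0: "k0 \<in> Omega_idx ar U A"
    and dom: "\<And>k. k \<in> K \<Longrightarrow> \<exists>h. ua_hom ar (fst k0) (fst k) h \<and> (\<forall>a\<in>A. h (snd k0 a) = snd k a)"
    using Omega_idx_directed[OF K] by blast
  have "prov x y" if xy: "x \<in> Omega ar U A" "y \<in> Omega ar U A" "x k0 = y k0" for x y
  proof (rule ccontr)
    assume "\<not> prov x y"
    then obtain k where k: "k \<in> K" "x k \<noteq> y k" using sep xy(1,2) by blast
    obtain h where h: "ua_hom ar (fst k0) (fst k) h" "\<forall>a\<in>A. h (snd k0 a) = snd k a"
      using dom[OF k(1)] by blast
    have kI: "k \<in> Omega_idx ar U A" using K(2) k(1) by blast
    have "x k = y k"
      using Omega_compat[OF xy(1) k0 kI h] Omega_compat[OF xy(2) k0 kI h] xy(3) by simp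
    then show False using k(2) by simp
  qed
  then show ?thesis using k0 by blast
qed

end

context term_model_setting
begin

definition sep_idx :: "('f, nat) alg \<times> (nat \<Rightarrow> nat)" where
  "sep_idx = (SOME k. k \<in> Omega_idx ar U A \<and> (\<forall>x\<in>Omega ar U A. \<forall>y\<in>Omega ar U A. x k = y k \<longrightarrow> prov x y))"

lemma sep_idx_in: "sep_idx \<in> Omega_idx ar U A"
  and sep_idx_separates: "x \<in> Omega ar U A \<Longrightarrow> y \<in> Omega ar U A \<Longrightarrow> x sep_idx = y sep_idx \<Longrightarrow> prov x y"
  using someI_ex[OF separating_index_exists[unfolded Bex_def]] unfolding sep_idx_def[symmetric] by blast+

abbreviation "S0 \<equiv> fst sep_idx"
abbreviation "ev0 t \<equiv> eval_trm (ua_ops S0) (snd sep_idx) t"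

text \<open>The choice of \<open>t\<close> does not matter because \<open>sep_idx\<close> separates provability classes.\<close>

definition quot :: "nat \<Rightarrow> nat" where
  "quot m = code (SOME t. t \<in> terms \<and> ev0 t = m)"

lemma quot_ev0: assumes t: "t \<in> terms" shows "quot (ev0 t) = code t"
proof -
  obtain t' where t': "t' \<in> terms" "ev0 t' = ev0 t" and q: "quot (ev0 t) = code t'"
    using someI_ex[of "\<lambda>t'. t' \<in> terms \<and> ev0 t' = ev0 t"] t unfolding quot_def by blast
  have "om t' sep_idx = om t sep_idx"
    using Omega_trm_apply[OF _ sep_idx_in] t t' by simp
  then have "prov (om t') (om t)" using sep_idx_separates Omega_trm_in t t'(1) by blast
  then show ?thesis using q code_eq_iff[OF t'(1) t] by simp
qed

lemma S0_carrier: "ua_carrier S0 = ev0 ` terms"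
  using Omega_idx_carrier[OF sep_idx_in] .

lemma hom_quot: "ua_hom ar S0 term_model quot"
  unfolding ua_hom_def
proof (intro conjI allI impI)
  show "quot \<in> ua_carrier S0 \<rightarrow> ua_carrier term_model"
    unfolding S0_carrier term_model_simps using quot_ev0 by auto
  fix f ms assume ms: "set ms \<subseteq> ua_carrier S0 \<and> length ms = ar f"
  then have "ms \<in> map ev0 ` lists terms"
    unfolding S0_carrier lists_image[symmetric] by auto
  then obtain ts where ts: "set ts \<subseteq> terms" "ms = map ev0 ts" by auto
  have len: "length ts = ar f" using ms ts(2) by simp
  have "quot (ua_ops S0 f ms) = quot (ev0 (App f ts))" using ts(2) by simp
  also have "\<dots> = code (App f ts)" using quot_ev0 App_in_wf_terms[OF len ts(1)] by blast
  also have "\<dots> = ua_ops term_model f (map code ts)" using term_model_ops_code[OF ts(1) len] by simp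
  also have "map code ts = map quot ms" unfolding ts(2) using ts(1) quot_ev0 by auto
  finally show "quot (ua_ops S0 f ms) = ua_ops term_model f (map quot ms)" .
qed

lemma term_model_in_U: "term_model \<in> U"
proof (rule hom_image_member[OF Omega_idx_D(1)[OF sep_idx_in] term_model_is_alg hom_quot])
  show "quot ` ua_carrier S0 = ua_carrier term_model"
    unfolding S0_carrier term_model_simps image_image using quot_ev0 by auto
qed

lemma term_model_in_model: "in_model ar U \<Sigma> term_model"
  unfolding in_model_def
proof (intro conjI ballI)
  show "term_model \<in> U" by (rule term_model_in_U)
  fix e assume e: "e \<in> \<Sigma>"
  let ?B = "id_vars e"
  have e_terms: "fst e \<in> wf_terms ar ?B" "snd e \<in> wf_terms ar ?B"
    using wf_\<Sigma> e unfolding wf_terms_def id_vars_def by auto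
  show "pi_holds ar U term_model ?B (Omega_trm ar U ?B (fst e)) (Omega_trm ar U ?B (snd e))"
    unfolding pi_holds_def
  proof (intro allI impI)
    fix \<phi> h assume "\<phi> \<in> ?B \<rightarrow> ua_carrier term_model \<and> cont_hom_to_alg ar U ?B term_model h \<and>
      (\<forall>b\<in>?B. h (Omega_gen ar U ?B b) = \<phi> b)"
    then have h: "ua_hom ar (Omega_alg ar U ?B) term_model h" unfolding cont_hom_to_alg_def by blast
    define d where "d = h (Omega_trm ar U ?B (fst e))"
    define \<sigma> where "\<sigma> x = (if x \<in> ?B then h (Omega_gen ar U ?B x) else d)" for x
    have "d \<in> ua_carrier term_model"
      using h Omega_trm_in[OF e_terms(1)] unfolding d_def ua_hom_def by auto
    then have \<sigma>: "\<forall>x. \<sigma> x \<in> ua_carrier term_model"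
      using h Omega_gen_in[of _ ?B] unfolding \<sigma>_def ua_hom_def by auto
    have "h (Omega_trm ar U ?B t) = eval_trm (ua_ops term_model) \<sigma> t" if t: "t \<in> wf_terms ar ?B" for t
      unfolding hom_Omega_trm[OF h t] using t unfolding \<sigma>_def wf_terms_def by (intro eval_trm_cong) auto
    then show "h (Omega_trm ar U ?B (fst e)) = h (Omega_trm ar U ?B (snd e))"
      using e_terms term_model_sat[OF e \<sigma>] by simp
  qed
qed

lemma cont_hom_quot_sep_idx: "cont_hom_to_alg ar U A term_model (\<lambda>x. quot (x sep_idx))"
  unfolding cont_hom_to_alg_def
proof
  have coord: "x sep_idx \<in> ua_carrier S0" if "x \<in> Omega ar U A" for x
    using Omega_apply_in[OF that sep_idx_in] .
  have into: "quot (x sep_idx) \<in> ua_carrier term_model" if "x \<in> Omega ar U A" for x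
    using hom_quot coord[OF that] unfolding ua_hom_def by auto
  show "ua_hom ar (Omega_alg ar U A) term_model (\<lambda>x. quot (x sep_idx))"
    unfolding ua_hom_def Omega_alg_simps
  proof (intro conjI allI impI)
    show "(\<lambda>x. quot (x sep_idx)) \<in> Omega ar U A \<rightarrow> ua_carrier term_model" using into by blast
    fix f xs assume xs: "set xs \<subseteq> Omega ar U A \<and> length xs = ar f"
    then have "set (map (\<lambda>x. x sep_idx) xs) \<subseteq> ua_carrier S0" using coord by auto
    then show "quot (Omega_op ar U A f xs sep_idx) = ua_ops term_model f (map (\<lambda>x. quot (x sep_idx)) xs)"
      using hom_quot xs Omega_op_apply[OF sep_idx_in] unfolding ua_hom_def by (simp add: o_def)
  qed
  show "continuous_map (Omega_top ar U A) (discrete_topology (ua_carrier term_model)) (\<lambda>x. quot (x sep_idx))"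
    by (rule continuous_map_Omega_top_discrete[of "{sep_idx}"]) (use sep_idx_in into in auto)
qed

lemma quot_sep_idx_provable:
  assumes x: "x \<in> Omega ar U A"
  obtains t where "t \<in> terms" "quot (x sep_idx) = code t" "prov (om t) x"
proof -
  obtain t where t: "t \<in> terms" "x sep_idx = ev0 t"
    using Omega_apply_in[OF x sep_idx_in] S0_carrier by blast
  have "prov (om t) x"
    using sep_idx_separates[OF Omega_trm_in[OF t(1)] x] Omega_trm_apply[OF t(1) sep_idx_in] t(2) by simp
  then show ?thesis using that t quot_ev0 by simp
qed

theorem valid_imp_provable:
  assumes u: "u \<in> Omega ar U A" and v: "v \<in> Omega ar U A"
    and valid: "\<forall>T. in_model ar U \<Sigma> T \<longrightarrow> pi_holds ar U T A u v"
  shows "prov u v"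
proof -
  have "(\<lambda>x. quot (x sep_idx)) \<in> Omega ar U A \<rightarrow> ua_carrier term_model"
    using cont_hom_quot_sep_idx unfolding cont_hom_to_alg_def ua_hom_def Omega_alg_simps by blast
  then have "(\<lambda>a. quot (Omega_gen ar U A a sep_idx)) \<in> A \<rightarrow> ua_carrier term_model"
    by (simp add: Pi_iff Omega_gen_in)
  then have "quot (u sep_idx) = quot (v sep_idx)"
    using valid term_model_in_model cont_hom_quot_sep_idx unfolding pi_holds_def by blast
  moreover obtain tu where tu: "tu \<in> terms" "quot (u sep_idx) = code tu" "prov (om tu) u"
    using quot_sep_idx_provable[OF u] .
  moreover obtain tv where tv: "tv \<in> terms" "quot (v sep_idx) = code tv" "prov (om tv) v"
    using quot_sep_idx_provable[OF v] .
  ultimately have "prov (om tu) (om tv)" using code_eq_iff by simp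
  then show ?thesis using tu(3) tv(3) provable_sym provable_trans by blast
qed

end

theorem theorem5p1:
  fixes ar :: "'f::finite \<Rightarrow> nat"
    and U :: "('f, nat) alg set"
    and \<Sigma> :: "(('f, nat) trm \<times> ('f, nat) trm) set"
  assumes "pseudovariety ar U"
    and "\<forall>e\<in>\<Sigma>. wf_trm ar (fst e) \<and> wf_trm ar (snd e)"
    and "locally_finite_variety ar \<Sigma>"
  shows "h_strong ar U \<Sigma>"
  unfolding h_strong_def
proof (intro allI impI ballI)
  fix A :: "nat set" and u v
  assume A: "finite A" and uv: "u \<in> Omega ar U A" "v \<in> Omega ar U A"
    and valid: "\<forall>T. in_model ar U \<Sigma> T \<longrightarrow> pi_holds ar U T A u v"
  interpret term_model_setting ar U \<Sigma> A
    by unfold_locales (use assms A in auto)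
  show "provable ar U \<Sigma> A u v" using valid_imp_provable[OF uv valid] .
qed

end
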